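(* Let $H$ be an Abelian group, $X$ a simplicial set, $Z\subset X$ a simplicial subset with inclusion $i$, $j:X\to X/Z$ the quotient. Let $\alpha:X_2\to H$ be a normalized 2-cocycle such that $i^*\alpha$ is a coboundary, and let $\nu:Z_1\to H$ be a normalized 1-cochain with $\partial\nu=i^*\alpha$. Let $\tilde\nu:X_1\to H$ be $\nu$ on $Z_1$ and $0$ elsewhere, and let $\beta:(X/Z)_2\to H$ be a normalized 2-cocycle with $j^*\beta=\alpha-\partial\tilde\nu$. Let $\mathrm{sDist}_\beta(X/Z)$ be the set of distributions on the twisted product over $X/Z$ determined by $\beta$, and $\mathrm{sDist}_\alpha(X,\nu)$ the set of distributions $p$ on the twisted product over $X$ determined by $\alpha$ whose restriction to $Z$ equals $\delta^{\varphi_\nu}$. Then there is a convex isomorphism \[ \mathrm{sDist}_\beta(X/Z)\cong \mathrm{sDist}_\alpha(X,\nu). \]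
   Context: Distributions take values in $\mathbb{R}_{\ge0}$: $D(S)$ = finitely supported probability distributions on $S$, extended levelwise to simplicial sets; a distribution on a simplicial map $\pi:E\to Y$ is a simplicial map $p:Y\to D(E)$ with $D(\pi)\circ p=\delta$. $N(H)$ is the nerve of $H$ ($N(H)_n=H^n$, $d_0$ drops first entry, $d_n$ last, inner $d_i$ add adjacent entries, $s_j$ inserts $0$). A normalized $n$-cochain is a map $Y_n\to H$ vanishing on degenerate simplices; $\partial$ is the coboundary, e.g. $\partial\nu(x)=\nu(d_0x)-\nu(d_1x)+\nu(d_2x)$; $i^*,j^*$ are precomposition. A normalized 2-cocycle $\gamma$ on $Y$ determines the twisting function $\eta_1=0,\eta_2=\gamma$, $\eta_n(y)=(\gamma(d_3\cdots d_ny),\eta_{n-1}(d_1y)-\eta_{n-1}(d_0y))$, and the twisted product $N(H)\times_\eta Y$ with simplices $H^n\times Y_n$, $d_0(g,y)=(d_0g+\eta_n(y),d_0y)$ and other structure maps componentwise; $\pi_\eta$ is the projection. The restriction of $p$ to $Z$ is $p\circ i$, a distribution on the restricted bundle over $Z$ (twisted by $i^*\alpha$). A section of $\pi_\eta$ is a simplicial map $s$ with $\pi_\eta s=\mathrm{id}$; $\varphi_\nu$ denotes the unique section of the restricted bundle over $Z$ whose $H$-component on $1$-simplices is $\nu$ (in degrees $0,1,2$: $z\mapsto(0,z)$, $(\nu(z),z)$, $((\nu(d_2z),\nu(d_1z)-\nu(d_2z)),z)$), and $\delta^{\varphi_\nu}=\delta\circ\varphi_\nu$. *)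

theory Defs
  imports Complex_Main
begin

text \<open>A simplicial set: carriers per degree, face maps fc n i : X_n -> X_(n-1) (for n >= 1,
  i <= n) and degeneracies dg n j : X_n -> X_(n+1) (j <= n). Values off the carriers are
  irrelevant.\<close>

record 'a sset =
  cells :: "nat \<Rightarrow> 'a set"
  fc :: "nat \<Rightarrow> nat \<Rightarrow> 'a \<Rightarrow> 'a"
  dg :: "nat \<Rightarrow> nat \<Rightarrow> 'a \<Rightarrow> 'a"

definition is_sset :: "('a, 'b) sset_scheme \<Rightarrow> bool" where
  "is_sset X \<longleftrightarrow>
     (\<forall>n i x. i \<le> Suc n \<longrightarrow> x \<in> cells X (Suc n) \<longrightarrow> fc X (Suc n) i x \<in> cells X n) \<and>
     (\<forall>n j x. j \<le> n \<longrightarrow> x \<in> cells X n \<longrightarrow> dg X n j x \<in> cells X (Suc n)) \<and>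
     (\<forall>n i j x. i < j \<longrightarrow> j \<le> Suc (Suc n) \<longrightarrow> x \<in> cells X (Suc (Suc n)) \<longrightarrow>
        fc X (Suc n) i (fc X (Suc (Suc n)) j x) = fc X (Suc n) (j - 1) (fc X (Suc (Suc n)) i x)) \<and>
     (\<forall>n i j x. i \<le> j \<longrightarrow> j \<le> n \<longrightarrow> x \<in> cells X n \<longrightarrow>
        dg X (Suc n) i (dg X n j x) = dg X (Suc n) (Suc j) (dg X n i x)) \<and>
     (\<forall>n i j x. i < j \<longrightarrow> j \<le> n \<longrightarrow> x \<in> cells X n \<longrightarrow>
        fc X (Suc n) i (dg X n j x) = dg X (n - 1) (j - 1) (fc X n i x)) \<and>
     (\<forall>n j x. j \<le> n \<longrightarrow> x \<in> cells X n \<longrightarrow>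
        fc X (Suc n) j (dg X n j x) = x \<and> fc X (Suc n) (Suc j) (dg X n j x) = x) \<and>
     (\<forall>n i j x. Suc j < i \<longrightarrow> i \<le> Suc n \<longrightarrow> x \<in> cells X n \<longrightarrow>
        fc X (Suc n) i (dg X n j x) = dg X (n - 1) j (fc X n (i - 1) x))"

definition smap :: "('a, 'c) sset_scheme \<Rightarrow> ('b, 'd) sset_scheme \<Rightarrow> (nat \<Rightarrow> 'a \<Rightarrow> 'b) \<Rightarrow> bool" where
  "smap X Y f \<longleftrightarrow>
     (\<forall>n x. x \<in> cells X n \<longrightarrow> f n x \<in> cells Y n) \<and>
     (\<forall>n i x. i \<le> Suc n \<longrightarrow> x \<in> cells X (Suc n) \<longrightarrow>
        f n (fc X (Suc n) i x) = fc Y (Suc n) i (f (Suc n) x)) \<and>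
     (\<forall>n j x. j \<le> n \<longrightarrow> x \<in> cells X n \<longrightarrow>
        f (Suc n) (dg X n j x) = dg Y n j (f n x))"

definition is_subsset :: "('a, 'b) sset_scheme \<Rightarrow> (nat \<Rightarrow> 'a set) \<Rightarrow> bool" where
  "is_subsset X Z \<longleftrightarrow>
     (\<forall>n. Z n \<subseteq> cells X n) \<and>
     (\<forall>n i x. i \<le> Suc n \<longrightarrow> x \<in> Z (Suc n) \<longrightarrow> fc X (Suc n) i x \<in> Z n) \<and>
     (\<forall>n j x. j \<le> n \<longrightarrow> x \<in> Z n \<longrightarrow> dg X n j x \<in> Z (Suc n))"

definition restr :: "'a sset \<Rightarrow> (nat \<Rightarrow> 'a set) \<Rightarrow> 'a sset" where
  "restr X Z = X\<lparr>cells := Z\<rparr>"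

text \<open>Quotient X/Z, modelled as the pushout of the point along Z -> X: the n-simplices are
  the n-simplices of X not in Z (tagged with Some) together with one base point None.\<close>
definition quot :: "'a sset \<Rightarrow> (nat \<Rightarrow> 'a set) \<Rightarrow> 'a option sset" where
  "quot X Z = \<lparr> cells = (\<lambda>n. Some ` (cells X n - Z n) \<union> {None}),
     fc = (\<lambda>n i x. case x of None \<Rightarrow> None
                 | Some a \<Rightarrow> (if fc X n i a \<in> Z (n - 1) then None else Some (fc X n i a))),
     dg = (\<lambda>n j x. map_option (dg X n j) x) \<rparr>"

definition qmap :: "(nat \<Rightarrow> 'a set) \<Rightarrow> nat \<Rightarrow> 'a \<Rightarrow> 'a option" where
  "qmap Z n a = (if a \<in> Z n then None else Some a)"

definition normalized_cochain :: "('a, 'b) sset_scheme \<Rightarrow> nat \<Rightarrow> ('a \<Rightarrow> 'h::ab_group_add) \<Rightarrow> bool" where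
  "normalized_cochain Y n f \<longleftrightarrow>
     (\<forall>m j x. Suc m = n \<longrightarrow> j \<le> m \<longrightarrow> x \<in> cells Y m \<longrightarrow> f (dg Y m j x) = 0)"

definition cobdry1 :: "('a, 'b) sset_scheme \<Rightarrow> ('a \<Rightarrow> 'h::ab_group_add) \<Rightarrow> 'a \<Rightarrow> 'h" where
  "cobdry1 Y \<nu> x = \<nu> (fc Y 2 0 x) - \<nu> (fc Y 2 1 x) + \<nu> (fc Y 2 2 x)"

definition cobdry2 :: "('a, 'b) sset_scheme \<Rightarrow> ('a \<Rightarrow> 'h::ab_group_add) \<Rightarrow> 'a \<Rightarrow> 'h" where
  "cobdry2 Y \<gamma> x = \<gamma> (fc Y 3 0 x) - \<gamma> (fc Y 3 1 x) + \<gamma> (fc Y 3 2 x) - \<gamma> (fc Y 3 3 x)"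

definition normalized_2cocycle :: "('a, 'b) sset_scheme \<Rightarrow> ('a \<Rightarrow> 'h::ab_group_add) \<Rightarrow> bool" where
  "normalized_2cocycle Y \<gamma> \<longleftrightarrow> normalized_cochain Y 2 \<gamma> \<and> (\<forall>x \<in> cells Y 3. cobdry2 Y \<gamma> x = 0)"

text \<open>Nerve N(H): n-simplices are lists of length n.\<close>
definition nerve_face :: "nat \<Rightarrow> nat \<Rightarrow> 'h::ab_group_add list \<Rightarrow> 'h list" where
  "nerve_face n i g =
     (if i = 0 then tl g
      else if i = n then butlast g
      else take (i - 1) g @ [g ! (i - 1) + g ! i] @ drop (Suc i) g)"

definition nerve_degen :: "nat \<Rightarrow> 'h::ab_group_add list \<Rightarrow> 'h list" where
  "nerve_degen j g = take j g @ 0 # drop j g"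

fun lastfaces :: "('a, 'b) sset_scheme \<Rightarrow> nat \<Rightarrow> nat \<Rightarrow> 'a \<Rightarrow> 'a" where
  "lastfaces Y 0 m y = y"
| "lastfaces Y (Suc k) m y = lastfaces Y k (m - 1) (fc Y m m y)"

fun eta :: "('a, 'b) sset_scheme \<Rightarrow> ('a \<Rightarrow> 'h::ab_group_add) \<Rightarrow> nat \<Rightarrow> 'a \<Rightarrow> 'h list" where
  "eta Y \<gamma> 0 y = []"
| "eta Y \<gamma> (Suc 0) y = []"
| "eta Y \<gamma> (Suc (Suc n)) y =
     \<gamma> (lastfaces Y n (Suc (Suc n)) y) #
       map2 (-) (eta Y \<gamma> (Suc n) (fc Y (Suc (Suc n)) 1 y)) (eta Y \<gamma> (Suc n) (fc Y (Suc (Suc n)) 0 y))"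

text \<open>Twisted product N(H) x_eta Y; the projection pi_eta is snd.\<close>
definition twisted :: "('a, 'b) sset_scheme \<Rightarrow> ('a \<Rightarrow> 'h::ab_group_add) \<Rightarrow> ('h list \<times> 'a) sset" where
  "twisted Y \<gamma> = \<lparr> cells = (\<lambda>n. {(g, y). length g = n \<and> y \<in> cells Y n}),
     fc = (\<lambda>n i (g, y). if i = 0 then (map2 (+) (tl g) (eta Y \<gamma> n y), fc Y n 0 y)
                        else (nerve_face n i g, fc Y n i y)),
     dg = (\<lambda>n j (g, y). (nerve_degen j g, dg Y n j y)) \<rparr>"

definition supp :: "('e \<Rightarrow> real) \<Rightarrow> 'e set" where
  "supp f = {a. f a \<noteq> 0}"

definition Dist :: "'e set \<Rightarrow> ('e \<Rightarrow> real) set" where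
  "Dist S = {f. (\<forall>a. 0 \<le> f a) \<and> finite (supp f) \<and> supp f \<subseteq> S \<and> sum f (supp f) = 1}"

definition Dmap :: "('e \<Rightarrow> 'f) \<Rightarrow> ('e \<Rightarrow> real) \<Rightarrow> ('f \<Rightarrow> real)" where
  "Dmap \<phi> f = (\<lambda>b. sum f {a \<in> supp f. \<phi> a = b})"

definition delta :: "'e \<Rightarrow> ('e \<Rightarrow> real)" where
  "delta x = (\<lambda>a. if a = x then 1 else 0)"

definition Dsset :: "('e, 'b) sset_scheme \<Rightarrow> ('e \<Rightarrow> real) sset" where
  "Dsset E = \<lparr> cells = (\<lambda>n. Dist (cells E n)),
     fc = (\<lambda>n i. Dmap (fc E n i)), dg = (\<lambda>n j. Dmap (dg E n j)) \<rparr>"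

text \<open>Off the carriers of Y we fix p to be 0,
  so that such p form a set of functions.\<close>
definition sdist :: "('a, 'b) sset_scheme \<Rightarrow> ('a \<Rightarrow> 'h::ab_group_add)
                      \<Rightarrow> (nat \<Rightarrow> 'a \<Rightarrow> ('h list \<times> 'a \<Rightarrow> real)) \<Rightarrow> bool" where
  "sdist Y \<gamma> p \<longleftrightarrow>
     smap Y (Dsset (twisted Y \<gamma>)) p \<and>
     (\<forall>n y. y \<in> cells Y n \<longrightarrow> Dmap snd (p n y) = delta y) \<and>
     (\<forall>n y. y \<notin> cells Y n \<longrightarrow> p n y = (\<lambda>_. 0))"

definition sDist :: "('a, 'b) sset_scheme \<Rightarrow> ('a \<Rightarrow> 'h::ab_group_add)
                      \<Rightarrow> (nat \<Rightarrow> 'a \<Rightarrow> ('h list \<times> 'a \<Rightarrow> real)) set" where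
  "sDist Y \<gamma> = {p. sdist Y \<gamma> p}"

text \<open>It is encoded by its H-component g (the section is
  z |-> (g n z, z)), normalised to [] off Z.\<close>
definition phi_nu :: "'a sset \<Rightarrow> (nat \<Rightarrow> 'a set) \<Rightarrow> ('a \<Rightarrow> 'h::ab_group_add) \<Rightarrow> ('a \<Rightarrow> 'h)
                      \<Rightarrow> nat \<Rightarrow> 'a \<Rightarrow> 'h list" where
  "phi_nu X Z \<alpha> \<nu> = (THE g. smap (restr X Z) (twisted (restr X Z) \<alpha>) (\<lambda>n z. (g n z, z)) \<and>
                              (\<forall>z \<in> Z 1. g 1 z = [\<nu> z]) \<and>
                              (\<forall>n z. z \<notin> Z n \<longrightarrow> g n z = []))"

definition sDist_rel :: "'a sset \<Rightarrow> (nat \<Rightarrow> 'a set) \<Rightarrow> ('a \<Rightarrow> 'h::ab_group_add) \<Rightarrow> ('a \<Rightarrow> 'h)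
                      \<Rightarrow> (nat \<Rightarrow> 'a \<Rightarrow> ('h list \<times> 'a \<Rightarrow> real)) set" where
  "sDist_rel X Z \<alpha> \<nu> = {p \<in> sDist X \<alpha>. \<forall>n. \<forall>z \<in> Z n. p n z = delta (phi_nu X Z \<alpha> \<nu> n z, z)}"

definition mixd :: "real \<Rightarrow> (nat \<Rightarrow> 'a \<Rightarrow> ('e \<Rightarrow> real)) \<Rightarrow> (nat \<Rightarrow> 'a \<Rightarrow> ('e \<Rightarrow> real))
                    \<Rightarrow> (nat \<Rightarrow> 'a \<Rightarrow> ('e \<Rightarrow> real))" where
  "mixd t p q = (\<lambda>n y e. t * p n y e + (1 - t) * q n y e)"

definition convex_iso :: "(nat \<Rightarrow> 'a \<Rightarrow> ('e \<Rightarrow> real)) set \<Rightarrow> (nat \<Rightarrow> 'b \<Rightarrow> ('f \<Rightarrow> real)) set \<Rightarrow>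
     ((nat \<Rightarrow> 'a \<Rightarrow> ('e \<Rightarrow> real)) \<Rightarrow> (nat \<Rightarrow> 'b \<Rightarrow> ('f \<Rightarrow> real))) \<Rightarrow> bool" where
  "convex_iso A B F \<longleftrightarrow> bij_betw F A B \<and>
     (\<forall>p \<in> A. \<forall>q \<in> A. \<forall>t \<in> {0..1}. F (mixd t p q) = mixd t (F p) (F q))"

end

theory Submission
  imports Defs
begin

(* Let \<sigma> be the H-component of the canonical section of the bundle over X twisted by the coboundary
  of \<nu>~, so that \<sigma> restricts to \<phi>_\<nu> on Z.  Since \<alpha> = j^*\<beta> + \<partial>\<nu>~, the fibrewise shift
  (g, x) \<mapsto> (g + \<sigma> x, x) is an isomorphism from the pullback along j of the bundle over X/Z twisted
  by \<beta> onto the bundle over X twisted by \<alpha>.  The base point of X/Z is a degenerate 0-simplex, over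
  which the fibre is a single point, so a distribution over X/Z is the Dirac measure at the zero
  section there; over Z the shift turns it into \<delta>^{\<phi>_\<nu>}.  Hence pulling back along j and shifting
  is a bijection sDist_\<beta>(X/Z) \<rightarrow> sDist_\<alpha>(X,\<nu>), with inverse "unshift and descend", and it is
  affine because pushforward of distributions is linear. *)

section \<open>Faces and degeneracies of the nerve\<close>

lemma nerve_face_length: "length g = Suc n \<Longrightarrow> i \<le> Suc n \<Longrightarrow> length (nerve_face (Suc n) i g) = n"
  unfolding nerve_face_def by (auto simp: min_def)

lemma nerve_face_nth:
  "length g = Suc n \<Longrightarrow> 1 \<le> i \<Longrightarrow> i \<le> Suc n \<Longrightarrow> k < n \<Longrightarrow>
   nerve_face (Suc n) i g ! k =
     (if k < i - 1 then g ! k else if k = i - 1 then g ! (i - 1) + g ! i else g ! Suc k)"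
  unfolding nerve_face_def by (auto simp: nth_append nth_butlast min_def)

lemma nerve_face_0: "nerve_face n 0 g = tl g"
  unfolding nerve_face_def by simp

lemma nerve_face_map2_add:
  fixes a b :: "'h::ab_group_add list"
  assumes "length a = Suc n" "length b = Suc n" "1 \<le> i" "i \<le> Suc n"
  shows "nerve_face (Suc n) i (map2 (+) a b) =
         map2 (+) (nerve_face (Suc n) i a) (nerve_face (Suc n) i b)"
  by (rule nth_equalityI) (use assms in \<open>auto simp: nerve_face_length nerve_face_nth\<close>)

lemma nerve_face_map2_diff:
  fixes a b :: "'h::ab_group_add list"
  assumes "length a = Suc n" "length b = Suc n" "1 \<le> i" "i \<le> Suc n"
  shows "nerve_face (Suc n) i (map2 (-) a b) =
         map2 (-) (nerve_face (Suc n) i a) (nerve_face (Suc n) i b)"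
  by (rule nth_equalityI) (use assms in \<open>auto simp: nerve_face_length nerve_face_nth\<close>)

lemma nerve_face_Cons:
  fixes l :: "'h::ab_group_add list"
  assumes "length l = n" "2 \<le> i" "i \<le> Suc n"
  shows "nerve_face (Suc n) i (a # l) = a # nerve_face n (i - 1) l"
proof -
  obtain m where "n = Suc m" using assms by (cases n) auto
  then show ?thesis
    by (intro nth_equalityI)
       (use assms in \<open>auto simp: nerve_face_length nerve_face_nth nth_Cons split: nat.splits\<close>)
qed

lemma nerve_face_1_Cons:
  fixes l :: "'h::ab_group_add list"
  assumes "length l = Suc n"
  shows "nerve_face (Suc (Suc n)) 1 (a # l) = (a + hd l) # tl l"
  using assms unfolding nerve_face_def by (cases l) auto

lemma nerve_face_replicate_0:
  assumes "i \<le> Suc n"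
  shows "nerve_face (Suc n) i (replicate (Suc n) (0::'h::ab_group_add)) = replicate n 0"
proof (cases "i = 0")
  case True
  then show ?thesis by (simp add: nerve_face_0)
next
  case False
  then show ?thesis
    by (intro nth_equalityI) (use assms in \<open>auto simp: nerve_face_length nerve_face_nth nth_Cons'\<close>)
qed

lemma nerve_degen_length: "length (nerve_degen j g) = Suc (length g)"
  unfolding nerve_degen_def by (auto simp: min_def)

lemma nerve_degen_nth:
  "j \<le> length g \<Longrightarrow> k < Suc (length g) \<Longrightarrow>
   nerve_degen j g ! k = (if k < j then g ! k else if k = j then 0 else g ! (k - 1))"
  unfolding nerve_degen_def by (auto simp: nth_append min_def nth_Cons')

lemma nerve_degen_map2_add:
  fixes a b :: "'h::ab_group_add list"
  assumes "length a = n" "length b = n" "j \<le> n"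
  shows "nerve_degen j (map2 (+) a b) = map2 (+) (nerve_degen j a) (nerve_degen j b)"
  by (rule nth_equalityI) (use assms in \<open>auto simp: nerve_degen_length nerve_degen_nth\<close>)

lemma nerve_degen_map2_diff:
  fixes a b :: "'h::ab_group_add list"
  assumes "length a = n" "length b = n" "j \<le> n"
  shows "nerve_degen j (map2 (-) a b) = map2 (-) (nerve_degen j a) (nerve_degen j b)"
  by (rule nth_equalityI) (use assms in \<open>auto simp: nerve_degen_length nerve_degen_nth\<close>)

lemma nerve_degen_0: "nerve_degen 0 l = 0 # l"
  unfolding nerve_degen_def by simp

lemma nerve_degen_Cons: "1 \<le> j \<Longrightarrow> nerve_degen j (a # l) = a # nerve_degen (j - 1) l"
  unfolding nerve_degen_def by (cases j) auto

lemma nerve_degen_replicate_0: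
  "j \<le> n \<Longrightarrow> nerve_degen j (replicate n (0::'h::ab_group_add)) = replicate (Suc n) 0"
  by (rule nth_equalityI) (auto simp: nerve_degen_length nerve_degen_nth nth_Cons')

lemma map2_add_diff_interchange:
  fixes a b c d :: "'h::ab_group_add list"
  assumes "length a = n" "length b = n" "length c = n" "length d = n"
  shows "map2 (-) (map2 (+) a b) (map2 (+) c d) = map2 (+) (map2 (-) a c) (map2 (-) b d)"
  by (rule nth_equalityI) (use assms in auto)

lemma map2_diff_diff_cancel:
  fixes a b c :: "'h::ab_group_add list"
  assumes "length a = n" "length b = n" "length c = n"
  shows "map2 (-) (map2 (-) a b) (map2 (-) c b) = map2 (-) a c"
  by (rule nth_equalityI) (use assms in auto)

lemma map2_diff_replicate_0: "length l = n \<Longrightarrow> map2 (-) l (replicate n (0::'h::ab_group_add)) = l"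
  by (rule nth_equalityI) auto

lemma map2_diff_add_cancel:
  fixes a b :: "'h::ab_group_add list"
  shows "length a = length b \<Longrightarrow> map2 (+) (map2 (-) a b) b = a"
  by (rule nth_equalityI) auto

lemma map2_add_diff_cancel:
  fixes a b :: "'h::ab_group_add list"
  shows "length a = length b \<Longrightarrow> map2 (-) (map2 (+) a b) b = a"
  by (rule nth_equalityI) auto

lemma map2_add_right_cancel:
  fixes a b c :: "'h::ab_group_add list"
  assumes "length a = length c" "length b = length c" "map2 (+) a c = map2 (+) b c"
  shows "a = b"
proof (rule nth_equalityI)
  fix k assume "k < length a"
  then show "a ! k = b ! k" using arg_cong[OF assms(3), of "\<lambda>l. l ! k"] assms(1,2) by simp
qed (use assms in simp)

lemma list_eq_by_butlast_tl:
  assumes "length a = Suc (Suc m)" "length b = Suc (Suc m)" "butlast a = butlast b" "tl a = tl b"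
  shows "a = b"
proof (rule nth_equalityI)
  show "length a = length b" using assms by simp
next
  fix k assume "k < length a"
  then consider "k < Suc m" | "k = Suc m" using assms by linarith
  then show "a ! k = b ! k"
  proof cases
    case 1
    then show ?thesis using arg_cong[OF assms(3), of "\<lambda>l. l ! k"] assms(1,2) by (simp add: nth_butlast)
  next
    case 2
    then show ?thesis using arg_cong[OF assms(4), of "\<lambda>l. l ! m"] assms(1,2) by (simp add: nth_tl)
  qed
qed

section \<open>Finitely supported distributions\<close>

lemma Dmap_eq_sum_over:
  assumes "finite S" "supp f \<subseteq> S"
  shows "Dmap \<phi> f b = sum f {a \<in> S. \<phi> a = b}"
  unfolding Dmap_def by (rule sum.mono_neutral_left) (use assms in \<open>auto simp: supp_def\<close>)

lemma supp_Dmap: "supp (Dmap \<phi> f) \<subseteq> \<phi> ` supp f"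
proof
  fix b assume "b \<in> supp (Dmap \<phi> f)"
  then have "sum f {a \<in> supp f. \<phi> a = b} \<noteq> 0" unfolding supp_def Dmap_def by simp
  then have "{a \<in> supp f. \<phi> a = b} \<noteq> {}" by (intro notI) simp
  then show "b \<in> \<phi> ` supp f" by auto
qed

lemma Dmap_comp:
  assumes "finite (supp f)"
  shows "Dmap \<psi> (Dmap \<phi> f) = Dmap (\<lambda>a. \<psi> (\<phi> a)) f"
proof
  fix b
  define S where "S = {a \<in> supp f. \<psi> (\<phi> a) = b}"
  define T where "T = {c \<in> \<phi> ` supp f. \<psi> c = b}"
  have fin: "finite (\<phi> ` supp f)" using assms by auto
  have "Dmap \<psi> (Dmap \<phi> f) b = sum (Dmap \<phi> f) T"
    unfolding T_def by (rule Dmap_eq_sum_over[OF fin supp_Dmap])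
  also have "\<dots> = (\<Sum>c\<in>T. sum f {a. a \<in> S \<and> \<phi> a = c})"
    unfolding Dmap_def S_def T_def by (intro sum.cong refl arg_cong2[where f = sum]) auto
  also have "\<dots> = sum f S"
    by (rule sum.group) (use assms fin in \<open>auto simp: S_def T_def\<close>)
  finally show "Dmap \<psi> (Dmap \<phi> f) b = Dmap (\<lambda>a. \<psi> (\<phi> a)) f b"
    unfolding Dmap_def[of "\<lambda>a. \<psi> (\<phi> a)"] S_def by simp
qed

lemma Dmap_cong: "(\<And>a. a \<in> supp f \<Longrightarrow> \<phi> a = \<psi> a) \<Longrightarrow> Dmap \<phi> f = Dmap \<psi> f"
  unfolding Dmap_def by (intro ext sum.cong) auto

lemma Dmap_commute:
  assumes "finite (supp f)" "\<And>a. a \<in> supp f \<Longrightarrow> \<phi> (\<psi> a) = \<psi>' (\<phi>' a)"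
  shows "Dmap \<phi> (Dmap \<psi> f) = Dmap \<psi>' (Dmap \<phi>' f)"
  unfolding Dmap_comp[OF assms(1)] using assms(2) by (rule Dmap_cong)

lemma Dmap_id: "Dmap (\<lambda>a. a) f = f"
proof
  fix b
  have "{a \<in> supp f. a = b} = (if f b = 0 then {} else {b})" by (auto simp: supp_def)
  then show "Dmap (\<lambda>a. a) f b = f b" unfolding Dmap_def by auto
qed

lemma Dmap_inverse:
  assumes "finite (supp f)" "\<And>a. a \<in> supp f \<Longrightarrow> \<psi> (\<phi> a) = a"
  shows "Dmap \<psi> (Dmap \<phi> f) = f"
  unfolding Dmap_comp[OF assms(1)] using Dmap_cong[of f "\<lambda>a. \<psi> (\<phi> a)" "\<lambda>a. a"] assms(2)
  by (simp add: Dmap_id)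

lemma supp_delta: "supp (delta a) = {a}"
  unfolding supp_def delta_def by auto

lemma Dmap_delta: "Dmap \<phi> (delta a) = delta (\<phi> a)"
proof
  fix b
  have "{x \<in> supp (delta a). \<phi> x = b} = (if \<phi> a = b then {a} else {})"
    unfolding supp_delta by auto
  then show "Dmap \<phi> (delta a) b = delta (\<phi> a) b"
    unfolding Dmap_def by (auto simp: delta_def)
qed

lemma delta_in_Dist: "a \<in> S \<Longrightarrow> delta a \<in> Dist S"
  unfolding Dist_def by (auto simp: supp_delta) (auto simp: delta_def)

lemma Dist_finite_supp: "f \<in> Dist S \<Longrightarrow> finite (supp f)"
  unfolding Dist_def by auto

lemma Dmap_const:
  assumes "f \<in> Dist S"
  shows "Dmap (\<lambda>_. c) f = delta c"
proof
  fix b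
  have "sum f (supp f) = 1" using assms unfolding Dist_def by auto
  then show "Dmap (\<lambda>_. c) f b = delta c b"
    unfolding Dmap_def delta_def by auto
qed

lemma Dmap_in_Dist:
  assumes "f \<in> Dist S" "\<And>a. a \<in> supp f \<Longrightarrow> \<phi> a \<in> T"
  shows "Dmap \<phi> f \<in> Dist T"
proof -
  have fin: "finite (supp f)" and nonneg: "\<And>a. 0 \<le> f a" and total: "sum f (supp f) = 1"
    using assms(1) unfolding Dist_def by auto
  have fin_image: "finite (\<phi> ` supp f)" using fin by simp
  have "sum (Dmap \<phi> f) (supp (Dmap \<phi> f)) = sum (Dmap \<phi> f) (\<phi> ` supp f)"
    by (rule sum.mono_neutral_left[OF fin_image supp_Dmap]) (simp add: supp_def)
  also have "\<dots> = (\<Sum>c\<in>\<phi> ` supp f. sum f {a. a \<in> supp f \<and> \<phi> a = c})"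
    unfolding Dmap_def by simp
  also have "\<dots> = 1"
    using sum.group[OF fin fin_image subset_refl, of f] total by simp
  finally show ?thesis
    using supp_Dmap[of \<phi> f] fin_image assms(2) unfolding Dist_def
    by (auto intro: sum_nonneg nonneg finite_subset simp: Dmap_def)
qed

lemma Dist_supp_snd:
  assumes "f \<in> Dist S" "Dmap snd f = delta y" "a \<in> supp f"
  shows "snd a = y"
proof (rule ccontr)
  assume ne: "snd a \<noteq> y"
  have fin: "finite (supp f)" and nonneg: "\<And>a. 0 \<le> f a"
    using assms(1) unfolding Dist_def by auto
  have "f a \<le> sum f {a' \<in> supp f. snd a' = snd a}"
    by (rule member_le_sum) (use fin nonneg assms(3) in auto)
  also have "\<dots> = Dmap snd f (snd a)" unfolding Dmap_def by simp
  also have "\<dots> = 0" using assms(2) ne by (simp add: delta_def)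
  finally show False using nonneg[of a] assms(3) by (simp add: supp_def)
qed

lemma Dist_eq_delta:
  assumes "f \<in> Dist S" "supp f \<subseteq> {a}"
  shows "f = delta a"
proof -
  have total: "sum f (supp f) = 1" using assms(1) unfolding Dist_def by auto
  then have "supp f = {a}" using assms(2) by (cases "supp f = {}") auto
  then have "f a = 1" "\<And>x. x \<noteq> a \<Longrightarrow> f x = 0" using total unfolding supp_def by auto
  then show ?thesis unfolding delta_def by (auto intro!: ext)
qed

lemma Dmap_mix:
  assumes "finite (supp f)" "finite (supp g)"
  shows "Dmap \<phi> (\<lambda>e. t * f e + (1 - t) * g e) b = t * Dmap \<phi> f b + (1 - t) * Dmap \<phi> g b"
proof -
  let ?S = "supp f \<union> supp g"
  have fin: "finite ?S" using assms by auto
  have "Dmap \<phi> (\<lambda>e. t * f e + (1 - t) * g e) b = (\<Sum>a\<in>{a \<in> ?S. \<phi> a = b}. t * f a + (1 - t) * g a)"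
    by (rule Dmap_eq_sum_over[OF fin]) (auto simp: supp_def)
  also have "\<dots> = t * sum f {a \<in> ?S. \<phi> a = b} + (1 - t) * sum g {a \<in> ?S. \<phi> a = b}"
    unfolding sum.distrib sum_distrib_left[symmetric] ..
  also have "\<dots> = t * Dmap \<phi> f b + (1 - t) * Dmap \<phi> g b"
    using Dmap_eq_sum_over[OF fin, of f \<phi> b] Dmap_eq_sum_over[OF fin, of g \<phi> b] by auto
  finally show ?thesis .
qed

section \<open>Simplicial sets and twisted products\<close>

locale simplicial_set =
  fixes Y :: "('a, 'b) sset_scheme"
  assumes is_sset: "is_sset Y"
begin

lemma face_cells: "i \<le> Suc n \<Longrightarrow> x \<in> cells Y (Suc n) \<Longrightarrow> fc Y (Suc n) i x \<in> cells Y n"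
  using is_sset[unfolded is_sset_def, THEN conjunct1] by blast

lemma degen_cells: "j \<le> n \<Longrightarrow> x \<in> cells Y n \<Longrightarrow> dg Y n j x \<in> cells Y (Suc n)"
  using is_sset[unfolded is_sset_def, THEN conjunct2, THEN conjunct1] by blast

lemma face_face:
  "i < j \<Longrightarrow> j \<le> Suc (Suc n) \<Longrightarrow> x \<in> cells Y (Suc (Suc n)) \<Longrightarrow>
   fc Y (Suc n) i (fc Y (Suc (Suc n)) j x) = fc Y (Suc n) (j - 1) (fc Y (Suc (Suc n)) i x)"
  using is_sset[unfolded is_sset_def, THEN conjunct2, THEN conjunct2, THEN conjunct1] by blast

lemma degen_degen:
  "i \<le> j \<Longrightarrow> j \<le> n \<Longrightarrow> x \<in> cells Y n \<Longrightarrow>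
   dg Y (Suc n) i (dg Y n j x) = dg Y (Suc n) (Suc j) (dg Y n i x)"
  using is_sset[unfolded is_sset_def, THEN conjunct2, THEN conjunct2, THEN conjunct2, THEN conjunct1] by blast

lemma face_degen_less:
  "i < j \<Longrightarrow> j \<le> n \<Longrightarrow> x \<in> cells Y n \<Longrightarrow>
   fc Y (Suc n) i (dg Y n j x) = dg Y (n - 1) (j - 1) (fc Y n i x)"
  using is_sset[unfolded is_sset_def, THEN conjunct2, THEN conjunct2, THEN conjunct2, THEN conjunct2, THEN conjunct1] by blast

lemma face_degen_same: "j \<le> n \<Longrightarrow> x \<in> cells Y n \<Longrightarrow> fc Y (Suc n) j (dg Y n j x) = x"
  using is_sset[unfolded is_sset_def, THEN conjunct2, THEN conjunct2, THEN conjunct2, THEN conjunct2, THEN conjunct2, THEN conjunct1] by blast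

lemma face_Suc_degen_same: "j \<le> n \<Longrightarrow> x \<in> cells Y n \<Longrightarrow> fc Y (Suc n) (Suc j) (dg Y n j x) = x"
  using is_sset[unfolded is_sset_def, THEN conjunct2, THEN conjunct2, THEN conjunct2, THEN conjunct2, THEN conjunct2, THEN conjunct1] by blast

lemma face_degen_greater:
  "Suc j < i \<Longrightarrow> i \<le> Suc n \<Longrightarrow> x \<in> cells Y n \<Longrightarrow>
   fc Y (Suc n) i (dg Y n j x) = dg Y (n - 1) j (fc Y n (i - 1) x)"
  using is_sset[unfolded is_sset_def, THEN conjunct2, THEN conjunct2, THEN conjunct2, THEN conjunct2, THEN conjunct2, THEN conjunct2] by blast

lemma lastfaces_cells: "k \<le> m \<Longrightarrow> y \<in> cells Y m \<Longrightarrow> lastfaces Y k m y \<in> cells Y (m - k)"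
proof (induction k arbitrary: m y)
  case (Suc k)
  then obtain m' where m: "m = Suc m'" by (cases m) auto
  have "fc Y m m y \<in> cells Y m'" using Suc.prems m face_cells by simp
  then show ?case using Suc.IH Suc.prems m by simp
qed simp

lemma lastfaces_Suc: "k < m \<Longrightarrow> lastfaces Y (Suc k) m y = fc Y (m - k) (m - k) (lastfaces Y k m y)"
proof (induction k arbitrary: m y)
  case (Suc k)
  have "lastfaces Y (Suc (Suc k)) m y = lastfaces Y (Suc k) (m - 1) (fc Y m m y)"
    by (simp only: lastfaces.simps)
  also have "\<dots> = fc Y (m - 1 - k) (m - 1 - k) (lastfaces Y k (m - 1) (fc Y m m y))"
    using Suc.IH[of "m - 1" "fc Y m m y"] Suc.prems by (simp del: lastfaces.simps)
  also have "lastfaces Y k (m - 1) (fc Y m m y) = lastfaces Y (Suc k) m y"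
    by (simp only: lastfaces.simps)
  finally show ?case by (simp del: lastfaces.simps)
qed simp

lemma face_lastfaces_low:
  "k < m \<Longrightarrow> i \<le> m - k \<Longrightarrow> y \<in> cells Y m \<Longrightarrow>
   fc Y (m - k) i (lastfaces Y k m y) = lastfaces Y k (m - 1) (fc Y m i y)"
proof (induction k arbitrary: m y)
  case (Suc k)
  define n where "n = m - 2"
  have m: "m = Suc (Suc n)" using Suc.prems unfolding n_def by arith
  have y1: "fc Y m m y \<in> cells Y (Suc n)" using face_cells[of m "Suc n" y] Suc.prems m by simp
  have swap: "fc Y (Suc n) i (fc Y m m y) = fc Y (Suc n) (Suc n) (fc Y m i y)"
    using face_face[of i m n y] Suc.prems m by simp
  have "fc Y (m - Suc k) i (lastfaces Y (Suc k) m y) =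
        fc Y (Suc n - k) i (lastfaces Y k (Suc n) (fc Y m m y))"
    using m by simp
  also have "\<dots> = lastfaces Y k n (fc Y (Suc n) i (fc Y m m y))"
    using Suc.IH[of "Suc n" "fc Y m m y"] Suc.prems m y1 by simp
  also have "\<dots> = lastfaces Y (Suc k) (m - 1) (fc Y m i y)"
    using swap m by simp
  finally show ?case .
qed simp

lemma lastfaces_face_high:
  "k < m \<Longrightarrow> m - k \<le> i \<Longrightarrow> i \<le> m \<Longrightarrow> y \<in> cells Y m \<Longrightarrow>
   lastfaces Y k (m - 1) (fc Y m i y) = lastfaces Y (Suc k) m y"
proof (induction k arbitrary: m i y)
  case (Suc k)
  define n where "n = m - 2"
  have m: "m = Suc (Suc n)" using Suc.prems unfolding n_def by arith
  show ?case
  proof (cases "i = m")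
    case False
    have y1: "fc Y m m y \<in> cells Y (Suc n)" using face_cells[of m "Suc n" y] Suc.prems m by simp
    have swap: "fc Y (Suc n) (Suc n) (fc Y m i y) = fc Y (Suc n) i (fc Y m m y)"
      using face_face[of i m n y] Suc.prems m False by simp
    have "lastfaces Y (Suc k) (m - 1) (fc Y m i y) =
          lastfaces Y k (Suc n - 1) (fc Y (Suc n) i (fc Y m m y))"
      using m swap by simp
    also have "\<dots> = lastfaces Y (Suc k) (Suc n) (fc Y m m y)"
      using Suc.IH[of "Suc n" i "fc Y m m y"] Suc.prems m y1 False by simp
    finally show ?thesis using m by simp
  qed simp
qed simp

lemma lastfaces_degen_low:
  "k + j \<le> m \<Longrightarrow> y \<in> cells Y m \<Longrightarrow>
   lastfaces Y k (Suc m) (dg Y m j y) = dg Y (m - k) j (lastfaces Y k m y)"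
proof (induction k arbitrary: m y)
  case (Suc k)
  define n where "n = m - 1"
  have m: "m = Suc n" using Suc.prems unfolding n_def by arith
  have y1: "fc Y m m y \<in> cells Y n" using face_cells[of m n y] Suc.prems m by simp
  have "fc Y (Suc m) (Suc m) (dg Y m j y) = dg Y n j (fc Y m m y)"
    using face_degen_greater[of j "Suc m" m y] Suc.prems m by simp
  then have "lastfaces Y (Suc k) (Suc m) (dg Y m j y) = lastfaces Y k (Suc n) (dg Y n j (fc Y m m y))"
    using m by simp
  also have "\<dots> = dg Y (n - k) j (lastfaces Y k n (fc Y m m y))"
    using Suc.IH[of n "fc Y m m y"] Suc.prems m y1 by simp
  finally show ?case using m by simp
qed simp

lemma lastfaces_degen_high:
  "1 \<le> k \<Longrightarrow> m < j + k \<Longrightarrow> j \<le> m \<Longrightarrow> y \<in> cells Y m \<Longrightarrow>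
   lastfaces Y k (Suc m) (dg Y m j y) = lastfaces Y (k - 1) m y"
proof (induction k arbitrary: m y)
  case (Suc k)
  show ?case
  proof (cases "j = m")
    case True
    then show ?thesis using face_Suc_degen_same[of m m y] Suc.prems by simp
  next
    case False
    define n where "n = m - 1"
    have m: "m = Suc n" using Suc.prems False unfolding n_def by arith
    have y1: "fc Y m m y \<in> cells Y n" using face_cells[of m n y] Suc.prems m by simp
    have k1: "1 \<le> k" using Suc.prems False by simp
    have "fc Y (Suc m) (Suc m) (dg Y m j y) = dg Y n j (fc Y m m y)"
      using face_degen_greater[of j "Suc m" m y] Suc.prems m False by simp
    then have "lastfaces Y (Suc k) (Suc m) (dg Y m j y) = lastfaces Y k (Suc n) (dg Y n j (fc Y m m y))"
      using m by simp
    also have "\<dots> = lastfaces Y (k - 1) n (fc Y m m y)"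
      using Suc.IH[of n "fc Y m m y"] Suc.prems m y1 k1 False by simp
    also have "\<dots> = lastfaces Y k m y" using m k1 by (cases k) auto
    finally show ?thesis by simp
  qed
qed simp

lemma smap_lastfaces:
  assumes "smap Y W f" "k \<le> m" "y \<in> cells Y m"
  shows "f (m - k) (lastfaces Y k m y) = lastfaces W k m (f m y)"
  using assms(2,3)
proof (induction k arbitrary: m y)
  case (Suc k)
  define n where "n = m - 1"
  have m: "m = Suc n" using Suc.prems unfolding n_def by arith
  have y1: "fc Y m m y \<in> cells Y n" using face_cells[of m n y] Suc.prems m by simp
  have "f n (fc Y m m y) = fc W m m (f m y)"
    using assms(1) Suc.prems m unfolding smap_def by blast
  then show ?case using Suc.IH[OF _ y1] Suc.prems m by simp
qed simp

end

lemma eta_length: "length (eta Y \<gamma> n y) = n - 1"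
  by (induction Y \<gamma> n y rule: eta.induct) auto

lemma eta_add: "eta Y (\<lambda>z. \<gamma>1 z + \<gamma>2 z) n y = map2 (+) (eta Y \<gamma>1 n y) (eta Y \<gamma>2 n y)"
proof (induction Y "\<lambda>z. \<gamma>1 z + \<gamma>2 z" n y rule: eta.induct)
  case (3 Y n y)
  show ?case
    by (simp only: eta.simps 3 list.map zip_Cons_Cons prod.case)
       (simp add: map2_add_diff_interchange[where n = n] eta_length)
qed auto

lemma twisted_cells: "cells (twisted Y \<gamma>) n = {(g, y). length g = n \<and> y \<in> cells Y n}"
  unfolding twisted_def by simp

lemma twisted_face:
  "fc (twisted Y \<gamma>) n i (g, y) =
   (if i = 0 then (map2 (+) (tl g) (eta Y \<gamma> n y), fc Y n 0 y) else (nerve_face n i g, fc Y n i y))"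
  unfolding twisted_def by simp

lemma twisted_degen: "dg (twisted Y \<gamma>) n j (g, y) = (nerve_degen j g, dg Y n j y)"
  unfolding twisted_def by simp

lemma sdistI:
  assumes "\<And>n y. y \<in> cells Y n \<Longrightarrow> p n y \<in> Dist (cells (twisted Y \<gamma>) n)"
    and "\<And>n i y. i \<le> Suc n \<Longrightarrow> y \<in> cells Y (Suc n) \<Longrightarrow>
        p n (fc Y (Suc n) i y) = Dmap (fc (twisted Y \<gamma>) (Suc n) i) (p (Suc n) y)"
    and "\<And>n j y. j \<le> n \<Longrightarrow> y \<in> cells Y n \<Longrightarrow>
        p (Suc n) (dg Y n j y) = Dmap (dg (twisted Y \<gamma>) n j) (p n y)"
    and "\<And>n y. y \<in> cells Y n \<Longrightarrow> Dmap snd (p n y) = delta y"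
    and "\<And>n y. y \<notin> cells Y n \<Longrightarrow> p n y = (\<lambda>_. 0)"
  shows "sdist Y \<gamma> p"
  using assms unfolding sdist_def smap_def Dsset_def by auto

lemma
  assumes "sdist Y \<gamma> p"
  shows sdist_in_Dist: "\<And>n y. y \<in> cells Y n \<Longrightarrow> p n y \<in> Dist (cells (twisted Y \<gamma>) n)"
    and sdist_face: "\<And>n i y. i \<le> Suc n \<Longrightarrow> y \<in> cells Y (Suc n) \<Longrightarrow>
        p n (fc Y (Suc n) i y) = Dmap (fc (twisted Y \<gamma>) (Suc n) i) (p (Suc n) y)"
    and sdist_degen: "\<And>n j y. j \<le> n \<Longrightarrow> y \<in> cells Y n \<Longrightarrow>
        p (Suc n) (dg Y n j y) = Dmap (dg (twisted Y \<gamma>) n j) (p n y)"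
    and sdist_snd: "\<And>n y. y \<in> cells Y n \<Longrightarrow> Dmap snd (p n y) = delta y"
    and sdist_outside: "\<And>n y. y \<notin> cells Y n \<Longrightarrow> p n y = (\<lambda>_. 0)"
  using assms unfolding sdist_def smap_def Dsset_def by auto

lemma sdist_finite_supp: "sdist Y \<gamma> p \<Longrightarrow> y \<in> cells Y n \<Longrightarrow> finite (supp (p n y))"
  by (rule Dist_finite_supp[OF sdist_in_Dist])

lemma sdist_supp:
  assumes "sdist Y \<gamma> p" "y \<in> cells Y n" "a \<in> supp (p n y)"
  shows "a = (fst a, y)" "length (fst a) = n"
proof -
  have D: "p n y \<in> Dist (cells (twisted Y \<gamma>) n)" by (rule sdist_in_Dist[OF assms(1,2)])
  have "snd a = y" by (rule Dist_supp_snd[OF D sdist_snd[OF assms(1,2)] assms(3)])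
  moreover have "a \<in> cells (twisted Y \<gamma>) n" using D assms(3) unfolding Dist_def by auto
  ultimately show "a = (fst a, y)" "length (fst a) = n" unfolding twisted_cells by (cases a, auto)+
qed

context simplicial_set
begin

lemma eta_cong:
  assumes "\<forall>z\<in>cells Y 2. \<gamma> z = \<gamma>' z" "y \<in> cells Y n"
  shows "eta Y \<gamma> n y = eta Y \<gamma>' n y"
  using assms(2)
proof (induction n arbitrary: y rule: less_induct)
  case (less n)
  show ?case
  proof (cases "n \<ge> 2")
    case True
    then obtain m where n: "n = Suc (Suc m)" by (metis add_2_eq_Suc le_Suc_ex)
    have "lastfaces Y m n y \<in> cells Y 2"
      using lastfaces_cells[of m n y] less.prems n by simp
    moreover have "fc Y n i y \<in> cells Y (Suc m)" if "i \<le> 1" for i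
      using face_cells[of i "Suc m" y] less.prems n that by simp
    ultimately show ?thesis using less.IH[of "Suc m"] assms(1) n by simp
  next
    case False
    then consider "n = 0" | "n = 1" by linarith
    then show ?thesis by cases auto
  qed
qed

lemma eta_smap:
  assumes "smap Y W f" "\<forall>z\<in>cells Y 2. \<gamma> z = \<gamma>' (f 2 z)" "y \<in> cells Y n"
  shows "eta Y \<gamma> n y = eta W \<gamma>' n (f n y)"
  using assms(3)
proof (induction n arbitrary: y rule: less_induct)
  case (less n)
  show ?case
  proof (cases "n \<ge> 2")
    case True
    then obtain m where n: "n = Suc (Suc m)" by (metis add_2_eq_Suc le_Suc_ex)
    have "lastfaces Y m n y \<in> cells Y 2"
      using lastfaces_cells[of m n y] less.prems n by simp
    moreover have "f 2 (lastfaces Y m n y) = lastfaces W m n (f n y)"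
      using smap_lastfaces[OF assms(1), of m n y] less.prems n by simp
    moreover have "eta Y \<gamma> (Suc m) (fc Y n i y) = eta W \<gamma>' (Suc m) (fc W n i (f n y))" if "i \<le> 1" for i
    proof -
      have "fc Y n i y \<in> cells Y (Suc m)" using face_cells[of i "Suc m" y] less.prems n that by simp
      moreover have "f (Suc m) (fc Y n i y) = fc W n i (f n y)"
        using assms(1) less.prems n that unfolding smap_def by auto
      ultimately show ?thesis using less.IH[of "Suc m"] n by simp
    qed
    ultimately show ?thesis using assms(2) n by simp
  next
    case False
    then consider "n = 0" | "n = 1" by linarith
    then show ?thesis by cases auto
  qed
qed

lemma twisted_face_cong:
  assumes "\<forall>z\<in>cells Y 2. \<gamma> z = \<gamma>' z" "y \<in> cells Y n"
  shows "fc (twisted Y \<gamma>) n i (g, y) = fc (twisted Y \<gamma>') n i (g, y)"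
  using eta_cong[OF assms] by (simp add: twisted_face)

lemma twisted_face_smap:
  assumes "smap Y W f" "\<forall>z\<in>cells Y 2. \<gamma> z = \<gamma>' (f 2 z)" "y \<in> cells Y (Suc n)" "i \<le> Suc n"
  shows "fc (twisted W \<gamma>') (Suc n) i (g, f (Suc n) y) =
         (fst (fc (twisted Y \<gamma>) (Suc n) i (g, y)), f n (fc Y (Suc n) i y))"
  using eta_smap[OF assms(1-3)] assms(1,3,4) unfolding twisted_face smap_def by auto

lemma smap_cong:
  assumes "smap Y W f" "\<And>n y. y \<in> cells Y n \<Longrightarrow> f n y = f' n y"
  shows "smap Y W f'"
  using assms face_cells degen_cells unfolding smap_def by metis

lemma smap_twisted_cong:
  assumes "\<forall>z\<in>cells Y 2. \<gamma> z = \<gamma>' z" "smap W (twisted Y \<gamma>) f"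
  shows "smap W (twisted Y \<gamma>') f"
  unfolding smap_def
proof (intro conjI allI impI)
  fix n i x assume "i \<le> Suc n" "x \<in> cells W (Suc n)"
  moreover obtain g y where "f (Suc n) x = (g, y)" by fastforce
  moreover from calculation have "y \<in> cells Y (Suc n)"
    using assms(2) unfolding smap_def twisted_cells by fastforce
  ultimately show "f n (fc W (Suc n) i x) = fc (twisted Y \<gamma>') (Suc n) i (f (Suc n) x)"
    using assms(2) twisted_face_cong[OF assms(1)] unfolding smap_def by metis
qed (use assms(2) in \<open>auto simp: smap_def twisted_cells twisted_def\<close>)

text \<open>A section of a twisted product is determined by its values on 1-simplices: the last face
  recovers all but the last entry of \<open>g\<close>, the face \<open>d\<^sub>0\<close> all but the first.\<close>

lemma twisted_section_unique:
  assumes g: "smap Y (twisted Y \<gamma>) (\<lambda>n y. (g n y, y))"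
    and g': "smap Y (twisted Y \<gamma>) (\<lambda>n y. (g' n y, y))"
    and agree: "\<forall>y\<in>cells Y 1. g 1 y = g' 1 y" and y: "y \<in> cells Y n"
  shows "g n y = g' n y"
  using y
proof (induction n arbitrary: y rule: less_induct)
  case (less n)
  have length: "length (h n y) = n" if "smap Y (twisted Y \<gamma>) (\<lambda>n y. (h n y, y))" for h
    using that less.prems unfolding smap_def twisted_cells by auto
  have face: "(h m (fc Y (Suc m) i y), fc Y (Suc m) i y) = fc (twisted Y \<gamma>) (Suc m) i (h (Suc m) y, y)"
    if "smap Y (twisted Y \<gamma>) (\<lambda>n y. (h n y, y))" "n = Suc m" "i \<le> Suc m" for h m i
    using that less.prems unfolding smap_def by auto
  consider "n = 0" | "n = 1" | m where "n = Suc (Suc m)" by (cases n; cases "n - 1") auto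
  then show ?case
  proof cases
    case 1
    then show ?thesis using length[OF g] length[OF g'] by simp
  next
    case 2
    then show ?thesis using agree less.prems by simp
  next
    case (3 m)
    have ih: "g (Suc m) (fc Y n i y) = g' (Suc m) (fc Y n i y)" if "i \<le> n" for i
      using less.IH[of "Suc m"] face_cells[of i "Suc m" y] less.prems 3 that by simp
    have "butlast (g n y) = butlast (g' n y)"
      using face[OF g 3, of n] face[OF g' 3, of n] ih[of n] 3 by (simp add: twisted_face nerve_face_def)
    moreover have "tl (g n y) = tl (g' n y)"
    proof (rule map2_add_right_cancel)
      have "map2 (+) (tl (h n y)) (eta Y \<gamma> n y) = h (Suc m) (fc Y n 0 y)"
        if "smap Y (twisted Y \<gamma>) (\<lambda>n y. (h n y, y))" for h
        using face[OF that 3, of 0] 3 by (simp add: twisted_face)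
      then show "map2 (+) (tl (g n y)) (eta Y \<gamma> n y) = map2 (+) (tl (g' n y)) (eta Y \<gamma> n y)"
        using g g' ih[of 0] by simp
    qed (use length[OF g] length[OF g'] 3 in \<open>simp_all add: eta_length\<close>)
    ultimately show ?thesis
      using list_eq_by_butlast_tl length[OF g] length[OF g'] 3 by blast
  qed
qed

end

locale twisting_cocycle = simplicial_set +
  fixes \<gamma> :: "'a \<Rightarrow> 'h::ab_group_add"
  assumes cocycle: "normalized_2cocycle Y \<gamma>"
begin

lemma cocycle_degen: "j \<le> 1 \<Longrightarrow> x \<in> cells Y 1 \<Longrightarrow> \<gamma> (dg Y 1 j x) = 0"
  using cocycle unfolding normalized_2cocycle_def normalized_cochain_def by auto

lemma cocycle_identity:
  "x \<in> cells Y 3 \<Longrightarrow> \<gamma> (fc Y 3 0 x) - \<gamma> (fc Y 3 1 x) + \<gamma> (fc Y 3 2 x) - \<gamma> (fc Y 3 3 x) = 0"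
  using cocycle unfolding normalized_2cocycle_def cobdry2_def by auto

text \<open>The first inner face is the only one at which the cocycle condition enters.\<close>

lemma eta_face_1:
  assumes y: "y \<in> cells Y (Suc (Suc n))"
  shows "nerve_face (Suc n) 1 (eta Y \<gamma> (Suc (Suc n)) y) = eta Y \<gamma> (Suc n) (fc Y (Suc (Suc n)) 2 y)"
proof (cases n)
  case 0
  then show ?thesis by (simp add: nerve_face_def)
next
  case (Suc m)
  let ?N = "Suc (Suc (Suc m))" and ?M = "Suc (Suc m)"
  let ?e = "\<lambda>k l. eta Y \<gamma> (Suc m) (fc Y ?M k (fc Y ?N l y))"
  let ?l = "\<lambda>k. lastfaces Y m ?M (fc Y ?N k y)"
  have y: "y \<in> cells Y ?N" using y Suc by simp
  have E: "eta Y \<gamma> ?M z = \<gamma> (lastfaces Y m ?M z) #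
      map2 (-) (eta Y \<gamma> (Suc m) (fc Y ?M 1 z)) (eta Y \<gamma> (Suc m) (fc Y ?M 0 z))" for z
    by (simp only: eta.simps)
  have cocycle_at_y: "\<gamma> (lastfaces Y (Suc m) ?N y) + \<gamma> (?l 1) - \<gamma> (?l 0) = \<gamma> (?l 2)"
  proof -
    define w where "w = lastfaces Y m ?N y"
    have "w \<in> cells Y 3" using lastfaces_cells[of m ?N y] y unfolding w_def by simp
    moreover have "fc Y 3 k w = ?l k" if "k \<le> 3" for k
      using face_lastfaces_low[of m ?N k y] y that unfolding w_def by simp
    moreover have "fc Y 3 3 w = lastfaces Y (Suc m) ?N y"
      using lastfaces_Suc[of m ?N y] unfolding w_def by simp
    ultimately show ?thesis using cocycle_identity[of w] by (simp add: algebra_simps)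
  qed
  have "nerve_face ?M 1 (eta Y \<gamma> ?N y) =
     (\<gamma> (lastfaces Y (Suc m) ?N y) + (\<gamma> (?l 1) - \<gamma> (?l 0))) #
     map2 (-) (map2 (-) (?e 1 1) (?e 0 1)) (map2 (-) (?e 1 0) (?e 0 0))"
    by (simp only: eta.simps, subst nerve_face_1_Cons)
       (simp_all only: E list.map zip_Cons_Cons prod.case list.sel eta_length length_map length_zip,
        simp_all add: eta_length)
  also have "map2 (-) (map2 (-) (?e 1 1) (?e 0 1)) (map2 (-) (?e 1 0) (?e 0 0)) =
             map2 (-) (?e 1 1) (?e 1 0)"
  proof -
    have "fc Y ?M 0 (fc Y ?N 1 y) = fc Y ?M 0 (fc Y ?N 0 y)"
      using face_face[of 0 1 "Suc m" y] y by simp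
    then show ?thesis by (simp only:) (rule map2_diff_diff_cancel[where n = m], simp_all add: eta_length)
  qed
  also have "map2 (-) (?e 1 1) (?e 1 0) =
      map2 (-) (eta Y \<gamma> (Suc m) (fc Y ?M 1 (fc Y ?N 2 y))) (eta Y \<gamma> (Suc m) (fc Y ?M 0 (fc Y ?N 2 y)))"
    using face_face[of 1 2 "Suc m" y] face_face[of 0 2 "Suc m" y] y by simp
  finally show ?thesis
    using cocycle_at_y unfolding Suc E[of "fc Y ?N 2 y"] by (simp add: algebra_simps)
qed

lemma eta_face:
  assumes "1 \<le> i" "i \<le> n" "y \<in> cells Y (Suc n)"
  shows "nerve_face n i (eta Y \<gamma> (Suc n) y) = eta Y \<gamma> n (fc Y (Suc n) (Suc i) y)"
  using assms
proof (induction n arbitrary: i y)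
  case (Suc m)
  show ?case
  proof (cases "i = 1")
    case True
    then show ?thesis using eta_face_1[OF Suc.prems(3)] by (simp add: numeral_2_eq_2)
  next
    case False
    then have i2: "2 \<le> i" using Suc.prems by simp
    then obtain m' where m: "m = Suc m'" using Suc.prems by (cases m) auto
    let ?N = "Suc (Suc m)"
    have ih: "nerve_face m (i - 1) (eta Y \<gamma> (Suc m) (fc Y ?N k y)) =
              eta Y \<gamma> m (fc Y (Suc m) i (fc Y ?N k y))" if "k \<le> 1" for k
      using Suc.IH[of "i - 1" "fc Y ?N k y"] face_cells[of k "Suc m" y] that Suc.prems i2 by simp
    have swap: "fc Y (Suc m) k (fc Y ?N (Suc i) y) = fc Y (Suc m) i (fc Y ?N k y)" if "k \<le> 1" for k
      using face_face[of k "Suc i" m y] Suc.prems i2 that by simp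
    have "nerve_face (Suc m) i (eta Y \<gamma> ?N y) =
          \<gamma> (lastfaces Y m ?N y) #
            nerve_face m (i - 1) (map2 (-) (eta Y \<gamma> (Suc m) (fc Y ?N 1 y)) (eta Y \<gamma> (Suc m) (fc Y ?N 0 y)))"
      by (simp only: eta.simps, rule nerve_face_Cons) (use Suc.prems i2 in \<open>simp_all add: eta_length\<close>)
    also have "\<dots> = \<gamma> (lastfaces Y m ?N y) #
        map2 (-) (eta Y \<gamma> m (fc Y (Suc m) i (fc Y ?N 1 y))) (eta Y \<gamma> m (fc Y (Suc m) i (fc Y ?N 0 y)))"
      using nerve_face_map2_diff[of "eta Y \<gamma> (Suc m) (fc Y ?N 1 y)" m' "eta Y \<gamma> (Suc m) (fc Y ?N 0 y)" "i - 1"]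
        ih[of 0] ih[of 1] Suc.prems m i2 by (simp add: eta_length)
    also have "\<dots> = eta Y \<gamma> (Suc m) (fc Y ?N (Suc i) y)"
    proof -
      have "lastfaces Y m' (Suc m) (fc Y ?N (Suc i) y) = lastfaces Y m ?N y"
        using lastfaces_face_high[of m' ?N "Suc i" y] Suc.prems m i2 by (simp del: lastfaces.simps)
      then show ?thesis using swap[of 0] swap[of 1] by (simp add: m del: lastfaces.simps)
    qed
    finally show ?thesis .
  qed
qed simp

lemma eta_degen_0:
  assumes "y \<in> cells Y n"
  shows "eta Y \<gamma> (Suc n) (dg Y n 0 y) = replicate n 0"
proof (cases n)
  case (Suc m)
  have "\<gamma> (lastfaces Y m (Suc n) (dg Y n 0 y)) = 0"
    using lastfaces_degen_low[of m 0 n y] lastfaces_cells[of m n y] cocycle_degen[of 0] assms Suc by simp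
  moreover have "fc Y (Suc n) k (dg Y n 0 y) = y" if "k \<le> 1" for k
    using face_degen_same[of 0 n y] face_Suc_degen_same[of 0 n y] assms that by (cases k) auto
  ultimately show ?thesis
    using Suc by (intro nth_equalityI) (auto simp: eta_length nth_Cons')
qed simp

lemma eta_degen:
  assumes "1 \<le> j" "j \<le> n" "y \<in> cells Y n"
  shows "eta Y \<gamma> (Suc n) (dg Y n j y) = nerve_degen (j - 1) (eta Y \<gamma> n y)"
  using assms
proof (induction n arbitrary: j y)
  case (Suc m)
  have E: "eta Y \<gamma> (Suc (Suc m)) (dg Y (Suc m) j y) = \<gamma> (lastfaces Y m (Suc (Suc m)) (dg Y (Suc m) j y)) #
        map2 (-) (eta Y \<gamma> (Suc m) (fc Y (Suc (Suc m)) 1 (dg Y (Suc m) j y)))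
                 (eta Y \<gamma> (Suc m) (fc Y (Suc (Suc m)) 0 (dg Y (Suc m) j y)))"
    by (simp only: eta.simps)
  show ?case
  proof (cases "j = 1")
    case True
    have "\<gamma> (lastfaces Y m (Suc (Suc m)) (dg Y (Suc m) 1 y)) = 0"
      using lastfaces_degen_low[of m 1 "Suc m" y] lastfaces_cells[of m "Suc m" y] cocycle_degen[of 1] Suc.prems
      by simp
    moreover have "fc Y (Suc (Suc m)) 1 (dg Y (Suc m) 1 y) = y"
      using face_degen_same[of 1 "Suc m" y] Suc.prems True by simp
    moreover have "eta Y \<gamma> (Suc m) (fc Y (Suc (Suc m)) 0 (dg Y (Suc m) 1 y)) = replicate m 0"
      using face_degen_less[of 0 1 "Suc m" y] face_cells[of 0 m y] eta_degen_0 Suc.prems True by simp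
    ultimately show ?thesis
      unfolding E True by (simp add: nerve_degen_0 eta_length map2_diff_replicate_0)
  next
    case False
    then have j2: "2 \<le> j" using Suc.prems by simp
    then obtain m' where m: "m = Suc m'" using Suc.prems by (cases m) auto
    have faces: "fc Y (Suc (Suc m)) k (dg Y (Suc m) j y) = dg Y m (j - 1) (fc Y (Suc m) k y)" if "k \<le> 1" for k
      using face_degen_less[of k j "Suc m" y] Suc.prems j2 that by simp
    have ih: "eta Y \<gamma> (Suc m) (dg Y m (j - 1) (fc Y (Suc m) k y)) =
              nerve_degen (j - 2) (eta Y \<gamma> m (fc Y (Suc m) k y))" if "k \<le> 1" for k
      using Suc.IH[of "j - 1"] face_cells[of k m y] Suc.prems j2 that by (simp add: numeral_2_eq_2)
    have "eta Y \<gamma> (Suc (Suc m)) (dg Y (Suc m) j y) = \<gamma> (lastfaces Y m' (Suc m) y) #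
        map2 (-) (nerve_degen (j - 2) (eta Y \<gamma> m (fc Y (Suc m) 1 y)))
                 (nerve_degen (j - 2) (eta Y \<gamma> m (fc Y (Suc m) 0 y)))"
      unfolding E using lastfaces_degen_high[of m "Suc m" j y] faces ih Suc.prems j2 m by simp
    also have "\<dots> = \<gamma> (lastfaces Y m' (Suc m) y) #
        nerve_degen (j - 2) (map2 (-) (eta Y \<gamma> m (fc Y (Suc m) 1 y)) (eta Y \<gamma> m (fc Y (Suc m) 0 y)))"
      by (subst nerve_degen_map2_diff[where n = m']) (use Suc.prems m j2 in \<open>simp_all add: eta_length\<close>)
    also have "\<dots> = nerve_degen (j - 1) (eta Y \<gamma> (Suc m) y)"
      using j2 unfolding m by (simp add: nerve_degen_Cons numeral_2_eq_2)
    finally show ?thesis .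
  qed
qed simp

end

section \<open>The canonical section of a coboundary twist\<close>

text \<open>The H-component of the section \<open>\<phi>\<^sub>\<mu>\<close> of the bundle twisted by \<open>\<partial>\<mu>\<close>: its head is \<open>\<mu>\<close> on the
  leading edge \<open>d\<^sub>2 \<cdots> d\<^sub>n y\<close>, and its tail is forced by the face \<open>d\<^sub>0\<close>.\<close>

fun cob_section :: "('a, 'b) sset_scheme \<Rightarrow> ('a \<Rightarrow> 'h::ab_group_add) \<Rightarrow> nat \<Rightarrow> 'a \<Rightarrow> 'h list" where
  "cob_section Y \<mu> 0 y = []"
| "cob_section Y \<mu> (Suc n) y = \<mu> (lastfaces Y n (Suc n) y) #
     map2 (-) (cob_section Y \<mu> n (fc Y (Suc n) 0 y)) (eta Y (cobdry1 Y \<mu>) (Suc n) y)"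

lemma cob_section_length: "length (cob_section Y \<mu> n y) = n"
  by (induction n arbitrary: y) (auto simp: eta_length)

lemma cob_section_face_0:
  "map2 (+) (tl (cob_section Y \<mu> (Suc n) y)) (eta Y (cobdry1 Y \<mu>) (Suc n) y) =
   cob_section Y \<mu> n (fc Y (Suc n) 0 y)"
  by (rule nth_equalityI) (auto simp: cob_section_length eta_length)

context simplicial_set
begin

lemma cob_section_cong:
  assumes "\<forall>z\<in>cells Y 1. \<mu> z = \<mu>' z" "y \<in> cells Y n"
  shows "cob_section Y \<mu> n y = cob_section Y \<mu>' n y"
  using assms(2)
proof (induction n arbitrary: y)
  case (Suc n)
  have "\<forall>z\<in>cells Y 2. cobdry1 Y \<mu> z = cobdry1 Y \<mu>' z"
  proof
    fix z assume "z \<in> cells Y 2"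
    then have "fc Y 2 k z \<in> cells Y 1" if "k \<le> 2" for k
      using face_cells[of k 1 z] that by (simp add: numeral_2_eq_2)
    then show "cobdry1 Y \<mu> z = cobdry1 Y \<mu>' z" unfolding cobdry1_def using assms(1) by simp
  qed
  then have "eta Y (cobdry1 Y \<mu>) (Suc n) y = eta Y (cobdry1 Y \<mu>') (Suc n) y"
    by (rule eta_cong[OF _ Suc.prems])
  moreover have "lastfaces Y n (Suc n) y \<in> cells Y 1"
    using lastfaces_cells[of n "Suc n" y] Suc.prems by simp
  moreover have "fc Y (Suc n) 0 y \<in> cells Y n" using face_cells[of 0 n y] Suc.prems by simp
  ultimately show ?case using Suc.IH assms(1) by simp
qed simp

end

locale normalized_1cochain = simplicial_set +
  fixes \<mu> :: "'a \<Rightarrow> 'h::ab_group_add"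
  assumes normalized: "normalized_cochain Y 1 \<mu>"
begin

lemma cochain_degen: "x \<in> cells Y 0 \<Longrightarrow> \<mu> (dg Y 0 0 x) = 0"
  using normalized unfolding normalized_cochain_def by auto

lemma coboundary_normalized_2cocycle: "normalized_2cocycle Y (cobdry1 Y \<mu>)"
proof -
  have "cobdry1 Y \<mu> (dg Y 1 j x) = 0" if "j \<le> 1" "x \<in> cells Y 1" for j x
  proof (cases j)
    case 0
    have "fc Y 2 0 (dg Y 1 0 x) = x" using face_degen_same[of 0 1 x] that by (simp add: numeral_2_eq_2)
    moreover have "fc Y 2 1 (dg Y 1 0 x) = x"
      using face_Suc_degen_same[of 0 1 x] that by (simp add: numeral_2_eq_2)
    moreover have "fc Y 2 2 (dg Y 1 0 x) = dg Y 0 0 (fc Y 1 1 x)"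
      using face_degen_greater[of 0 2 1 x] that by (simp add: numeral_2_eq_2)
    moreover have "fc Y 1 1 x \<in> cells Y 0" using face_cells[of 1 0 x] that by simp
    ultimately show ?thesis unfolding cobdry1_def 0 using cochain_degen by simp
  next
    case (Suc j')
    then have j: "j = 1" using that by simp
    have "fc Y 2 1 (dg Y 1 1 x) = x" using face_degen_same[of 1 1 x] that by (simp add: numeral_2_eq_2)
    moreover have "fc Y 2 2 (dg Y 1 1 x) = x"
      using face_Suc_degen_same[of 1 1 x] that by (simp add: numeral_2_eq_2)
    moreover have "fc Y 2 0 (dg Y 1 1 x) = dg Y 0 0 (fc Y 1 0 x)"
      using face_degen_less[of 0 1 1 x] that by (simp add: numeral_2_eq_2)
    moreover have "fc Y 1 0 x \<in> cells Y 0" using face_cells[of 0 0 x] that by simp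
    ultimately show ?thesis unfolding cobdry1_def j using cochain_degen by simp
  qed
  then have "normalized_cochain Y 2 (cobdry1 Y \<mu>)"
    unfolding normalized_cochain_def by (auto simp: numeral_2_eq_2)
  moreover have "cobdry2 Y (cobdry1 Y \<mu>) x = 0" if x: "x \<in> cells Y 3" for x
  proof -
    have e: "fc Y 2 i (fc Y 3 j x) = fc Y 2 (j - 1) (fc Y 3 i x)" if "i < j" "j \<le> 3" for i j
      using face_face[of i j 1 x] x that by (simp add: numeral_2_eq_2 numeral_3_eq_3)
    show ?thesis
      using e[of 0 1] e[of 0 2] e[of 0 3] e[of 1 2] e[of 1 3] e[of 2 3]
      by (simp add: cobdry2_def cobdry1_def algebra_simps)
  qed
  ultimately show ?thesis unfolding normalized_2cocycle_def by auto
qed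

sublocale twisting_cocycle Y "cobdry1 Y \<mu>"
  by unfold_locales (rule coboundary_normalized_2cocycle)

lemma cob_section_face_1:
  assumes "y \<in> cells Y (Suc (Suc n))"
  shows "nerve_face (Suc (Suc n)) 1 (cob_section Y \<mu> (Suc (Suc n)) y) =
         cob_section Y \<mu> (Suc n) (fc Y (Suc (Suc n)) 1 y)"
proof -
  let ?N = "Suc (Suc n)" and ?\<Gamma> = "cobdry1 Y \<mu>"
  let ?c = "cob_section Y \<mu> n (fc Y (Suc n) 0 (fc Y ?N 0 y))"
  let ?e = "\<lambda>k. eta Y ?\<Gamma> (Suc n) (fc Y ?N k y)"
  have C: "cob_section Y \<mu> (Suc n) z =
      \<mu> (lastfaces Y n (Suc n) z) # map2 (-) (cob_section Y \<mu> n (fc Y (Suc n) 0 z)) (eta Y ?\<Gamma> (Suc n) z)" for z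
    by (simp only: cob_section.simps)
  have head: "\<mu> (lastfaces Y (Suc n) ?N y) + (\<mu> (lastfaces Y n (Suc n) (fc Y ?N 0 y)) - ?\<Gamma> (lastfaces Y n ?N y))
      = \<mu> (lastfaces Y n (Suc n) (fc Y ?N 1 y))"
  proof -
    define w where "w = lastfaces Y n ?N y"
    have "fc Y 2 k w = lastfaces Y n (Suc n) (fc Y ?N k y)" if "k \<le> 2" for k
      using face_lastfaces_low[of n ?N k y] assms that unfolding w_def by simp
    moreover have "fc Y 2 2 w = lastfaces Y (Suc n) ?N y"
      using lastfaces_Suc[of n ?N y] unfolding w_def by simp
    ultimately show ?thesis unfolding w_def[symmetric] cobdry1_def by (simp add: algebra_simps)
  qed
  have "nerve_face ?N 1 (cob_section Y \<mu> ?N y) =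
     (\<mu> (lastfaces Y (Suc n) ?N y) + (\<mu> (lastfaces Y n (Suc n) (fc Y ?N 0 y)) - ?\<Gamma> (lastfaces Y n ?N y))) #
       map2 (-) (map2 (-) ?c (?e 0)) (map2 (-) (?e 1) (?e 0))"
    by (simp only: cob_section.simps, subst nerve_face_1_Cons)
       (simp_all only: C eta.simps list.map zip_Cons_Cons prod.case list.sel eta_length
          cob_section_length length_map length_zip,
        simp_all add: eta_length cob_section_length)
  also have "map2 (-) (map2 (-) ?c (?e 0)) (map2 (-) (?e 1) (?e 0)) = map2 (-) ?c (?e 1)"
    by (rule nth_equalityI) (auto simp: eta_length cob_section_length)
  also have "fc Y (Suc n) 0 (fc Y ?N 0 y) = fc Y (Suc n) 0 (fc Y ?N 1 y)"
    using face_face[of 0 1 n y] assms by simp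
  finally show ?thesis unfolding head C[of "fc Y ?N 1 y"] .
qed

lemma cob_section_face:
  assumes "1 \<le> i" "i \<le> Suc n" "y \<in> cells Y (Suc n)"
  shows "nerve_face (Suc n) i (cob_section Y \<mu> (Suc n) y) = cob_section Y \<mu> n (fc Y (Suc n) i y)"
  using assms
proof (induction n arbitrary: i y)
  case 0
  then have "i = 1" by simp
  then show ?case by (simp add: nerve_face_def)
next
  case (Suc m)
  show ?case
  proof (cases "i = 1")
    case True
    then show ?thesis using cob_section_face_1[OF Suc.prems(3)] by simp
  next
    case False
    then have i2: "2 \<le> i" using Suc.prems by simp
    let ?N = "Suc (Suc m)" and ?\<Gamma> = "cobdry1 Y \<mu>"
    have ih: "nerve_face (Suc m) (i - 1) (cob_section Y \<mu> (Suc m) (fc Y ?N 0 y)) =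
              cob_section Y \<mu> m (fc Y (Suc m) (i - 1) (fc Y ?N 0 y))"
      using Suc.IH[of "i - 1" "fc Y ?N 0 y"] face_cells[of 0 "Suc m" y] Suc.prems i2 by simp
    have eta_i: "nerve_face (Suc m) (i - 1) (eta Y ?\<Gamma> ?N y) = eta Y ?\<Gamma> (Suc m) (fc Y ?N i y)"
      using eta_face[of "i - 1" "Suc m" y] Suc.prems i2 by simp
    have "nerve_face ?N i (cob_section Y \<mu> ?N y) = \<mu> (lastfaces Y (Suc m) ?N y) #
          nerve_face (Suc m) (i - 1) (map2 (-) (cob_section Y \<mu> (Suc m) (fc Y ?N 0 y)) (eta Y ?\<Gamma> ?N y))"
      by (simp only: cob_section.simps, rule nerve_face_Cons)
         (use Suc.prems i2 in \<open>simp_all add: eta_length cob_section_length\<close>)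
    also have "\<dots> = \<mu> (lastfaces Y (Suc m) ?N y) #
          map2 (-) (cob_section Y \<mu> m (fc Y (Suc m) (i - 1) (fc Y ?N 0 y))) (eta Y ?\<Gamma> (Suc m) (fc Y ?N i y))"
      using nerve_face_map2_diff[of "cob_section Y \<mu> (Suc m) (fc Y ?N 0 y)" m "eta Y ?\<Gamma> ?N y" "i - 1"]
        ih eta_i Suc.prems i2
      by (simp add: eta_length cob_section_length)
    also have "\<dots> = cob_section Y \<mu> (Suc m) (fc Y ?N i y)"
      using face_face[of 0 i m y] lastfaces_face_high[of m ?N i y] Suc.prems i2
      by (simp del: lastfaces.simps)
    finally show ?thesis .
  qed
qed

lemma cob_section_degen_0:
  assumes "y \<in> cells Y n"
  shows "cob_section Y \<mu> (Suc n) (dg Y n 0 y) = 0 # cob_section Y \<mu> n y"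
proof -
  have "lastfaces Y n (Suc n) (dg Y n 0 y) = dg Y 0 0 (lastfaces Y n n y)"
    using lastfaces_degen_low[of n 0 n y] assms by simp
  moreover have "lastfaces Y n n y \<in> cells Y 0" using lastfaces_cells[of n n y] assms by simp
  moreover have "fc Y (Suc n) 0 (dg Y n 0 y) = y" using face_degen_same[of 0 n y] assms by simp
  ultimately show ?thesis
    using eta_degen_0[OF assms] cochain_degen
    by (simp add: map2_diff_replicate_0 cob_section_length del: replicate.simps)
qed

lemma cob_section_degen:
  assumes "j \<le> n" "y \<in> cells Y n"
  shows "cob_section Y \<mu> (Suc n) (dg Y n j y) = nerve_degen j (cob_section Y \<mu> n y)"
  using assms
proof (induction n arbitrary: j y)
  case 0
  then have "j = 0" by simp
  then show ?case using cob_section_degen_0[OF 0(2)] by (simp add: nerve_degen_0 del: cob_section.simps)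
next
  case (Suc m)
  show ?case
  proof (cases "j = 0")
    case True
    then show ?thesis using cob_section_degen_0[OF Suc.prems(2)] by (simp add: nerve_degen_0)
  next
    case False
    let ?\<Gamma> = "cobdry1 Y \<mu>"
    have C: "cob_section Y \<mu> (Suc (Suc m)) (dg Y (Suc m) j y) =
        \<mu> (lastfaces Y (Suc m) (Suc (Suc m)) (dg Y (Suc m) j y)) #
        map2 (-) (cob_section Y \<mu> (Suc m) (fc Y (Suc (Suc m)) 0 (dg Y (Suc m) j y)))
                 (eta Y ?\<Gamma> (Suc (Suc m)) (dg Y (Suc m) j y))"
      by (simp only: cob_section.simps)
    have lf: "lastfaces Y (Suc m) (Suc (Suc m)) (dg Y (Suc m) j y) = lastfaces Y m (Suc m) y"
      using lastfaces_degen_high[of "Suc m" "Suc m" j y] Suc.prems False by simp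
    have ih: "cob_section Y \<mu> (Suc m) (fc Y (Suc (Suc m)) 0 (dg Y (Suc m) j y)) =
        nerve_degen (j - 1) (cob_section Y \<mu> m (fc Y (Suc m) 0 y))"
      using face_degen_less[of 0 j "Suc m" y] face_cells[of 0 m y] Suc.IH[of "j - 1"] Suc.prems False
      by simp
    have eta_j: "eta Y ?\<Gamma> (Suc (Suc m)) (dg Y (Suc m) j y) = nerve_degen (j - 1) (eta Y ?\<Gamma> (Suc m) y)"
      using eta_degen[of j "Suc m" y] Suc.prems False by simp
    have "cob_section Y \<mu> (Suc (Suc m)) (dg Y (Suc m) j y) = \<mu> (lastfaces Y m (Suc m) y) #
        nerve_degen (j - 1) (map2 (-) (cob_section Y \<mu> m (fc Y (Suc m) 0 y)) (eta Y ?\<Gamma> (Suc m) y))"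
      unfolding C lf ih eta_j
      by (subst nerve_degen_map2_diff[where n = m]) (use Suc.prems in \<open>simp_all add: eta_length cob_section_length\<close>)
    also have "\<dots> = nerve_degen j (cob_section Y \<mu> (Suc m) y)"
      using False by (simp add: nerve_degen_Cons)
    finally show ?thesis .
  qed
qed

lemma cob_section_is_section: "smap Y (twisted Y (cobdry1 Y \<mu>)) (\<lambda>n y. (cob_section Y \<mu> n y, y))"
  unfolding smap_def
proof (intro conjI allI impI)
  fix n y assume "y \<in> cells Y n"
  then show "(cob_section Y \<mu> n y, y) \<in> cells (twisted Y (cobdry1 Y \<mu>)) n"
    by (simp add: twisted_cells cob_section_length)
next
  fix n i y assume "i \<le> Suc n" "y \<in> cells Y (Suc n)"
  then show "(cob_section Y \<mu> n (fc Y (Suc n) i y), fc Y (Suc n) i y) =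
             fc (twisted Y (cobdry1 Y \<mu>)) (Suc n) i (cob_section Y \<mu> (Suc n) y, y)"
    using cob_section_face_0[of Y \<mu> n y] cob_section_face[of i n y]
    by (cases "i = 0") (simp_all add: twisted_face del: cob_section.simps)
next
  fix n j y assume "j \<le> n" "y \<in> cells Y n"
  then show "(cob_section Y \<mu> (Suc n) (dg Y n j y), dg Y n j y) =
             dg (twisted Y (cobdry1 Y \<mu>)) n j (cob_section Y \<mu> n y, y)"
    using cob_section_degen by (simp add: twisted_degen del: cob_section.simps)
qed

text \<open>Adding the section \<open>\<phi>\<^sub>\<mu>\<close> fibrewise is a simplicial isomorphism
  \<open>N(H) \<times>\<^bsub>\<gamma>\<^esub> Y \<rightarrow> N(H) \<times>\<^bsub>\<gamma> + \<partial>\<mu>\<^esub> Y\<close>, for every \<open>\<gamma>\<close>.\<close>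

lemma twisted_face_shift:
  assumes y: "y \<in> cells Y (Suc n)" and g: "length g = Suc n" and i: "i \<le> Suc n"
  shows "fc (twisted Y (\<lambda>z. \<gamma> z + cobdry1 Y \<mu> z)) (Suc n) i (map2 (+) g (cob_section Y \<mu> (Suc n) y), y) =
         (map2 (+) (fst (fc (twisted Y \<gamma>) (Suc n) i (g, y))) (cob_section Y \<mu> n (fc Y (Suc n) i y)),
          fc Y (Suc n) i y)"
proof (cases "i = 0")
  case True
  then show ?thesis
    unfolding True twisted_face eta_add cob_section_face_0[symmetric]
    by (simp del: cob_section.simps, intro nth_equalityI)
       (use g in \<open>auto simp: cob_section_length eta_length nth_tl simp del: cob_section.simps\<close>)
next
  case False
  then have "nerve_face (Suc n) i (map2 (+) g (cob_section Y \<mu> (Suc n) y)) =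
             map2 (+) (nerve_face (Suc n) i g) (cob_section Y \<mu> n (fc Y (Suc n) i y))"
    using nerve_face_map2_add[OF g cob_section_length, of i Y \<mu> y] cob_section_face[OF _ i y] i
    by (simp del: cob_section.simps)
  with False show ?thesis by (simp add: twisted_face del: cob_section.simps)
qed

lemma twisted_face_unshift:
  assumes y: "y \<in> cells Y (Suc n)" and g: "length g = Suc n" and i: "i \<le> Suc n"
  shows "fc (twisted Y \<gamma>) (Suc n) i (map2 (-) g (cob_section Y \<mu> (Suc n) y), y) =
         (map2 (-) (fst (fc (twisted Y (\<lambda>z. \<gamma> z + cobdry1 Y \<mu> z)) (Suc n) i (g, y)))
                   (cob_section Y \<mu> n (fc Y (Suc n) i y)),
          fc Y (Suc n) i y)"
proof (cases "i = 0")
  case True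
  then show ?thesis
    unfolding True twisted_face eta_add cob_section_face_0[symmetric]
    by (simp del: cob_section.simps, intro nth_equalityI)
       (use g in \<open>auto simp: cob_section_length eta_length nth_tl simp del: cob_section.simps\<close>)
next
  case False
  then have "nerve_face (Suc n) i (map2 (-) g (cob_section Y \<mu> (Suc n) y)) =
             map2 (-) (nerve_face (Suc n) i g) (cob_section Y \<mu> n (fc Y (Suc n) i y))"
    using nerve_face_map2_diff[OF g cob_section_length, of i Y \<mu> y] cob_section_face[OF _ i y] i
    by (simp del: cob_section.simps)
  with False show ?thesis by (simp add: twisted_face del: cob_section.simps)
qed

lemma nerve_degen_shift:
  "y \<in> cells Y n \<Longrightarrow> length g = n \<Longrightarrow> j \<le> n \<Longrightarrow>
   nerve_degen j (map2 (+) g (cob_section Y \<mu> n y)) =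
   map2 (+) (nerve_degen j g) (cob_section Y \<mu> (Suc n) (dg Y n j y))"
  using nerve_degen_map2_add[OF _ cob_section_length] cob_section_degen by (simp del: cob_section.simps)

lemma nerve_degen_unshift:
  "y \<in> cells Y n \<Longrightarrow> length g = n \<Longrightarrow> j \<le> n \<Longrightarrow>
   nerve_degen j (map2 (-) g (cob_section Y \<mu> n y)) =
   map2 (-) (nerve_degen j g) (cob_section Y \<mu> (Suc n) (dg Y n j y))"
  using nerve_degen_map2_diff[OF _ cob_section_length] cob_section_degen by (simp del: cob_section.simps)

end

section \<open>Restriction and quotient\<close>

lemma restr_simps [simp]: "cells (restr X Z) = Z" "fc (restr X Z) = fc X" "dg (restr X Z) = dg X"
  unfolding restr_def by simp_all

lemma restr_is_sset:
  fixes Y :: "'a sset"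
  assumes Y: "is_sset Y" and Z: "is_subsset Y Z"
  shows "is_sset (restr Y Z)"
proof -
  interpret simplicial_set Y by (rule simplicial_set.intro[OF Y])
  have sub: "\<And>x n. x \<in> Z n \<Longrightarrow> x \<in> cells Y n" using Z unfolding is_subsset_def by blast
  have face: "\<And>n i x. i \<le> Suc n \<Longrightarrow> x \<in> Z (Suc n) \<Longrightarrow> fc Y (Suc n) i x \<in> Z n"
    using Z unfolding is_subsset_def by blast
  have degen: "\<And>n j x. j \<le> n \<Longrightarrow> x \<in> Z n \<Longrightarrow> dg Y n j x \<in> Z (Suc n)"
    using Z unfolding is_subsset_def by blast
  show ?thesis unfolding is_sset_def restr_simps
  proof (intro conjI allI impI)
    show "fc Y (Suc n) i x \<in> Z n" if "i \<le> Suc n" "x \<in> Z (Suc n)" for n i x using face that .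
    show "dg Y n j x \<in> Z (Suc n)" if "j \<le> n" "x \<in> Z n" for n j x using degen that .
    show "fc Y (Suc n) i (fc Y (Suc (Suc n)) j x) = fc Y (Suc n) (j - 1) (fc Y (Suc (Suc n)) i x)"
      if "i < j" "j \<le> Suc (Suc n)" "x \<in> Z (Suc (Suc n))" for n i j x using face_face that sub by blast
    show "dg Y (Suc n) i (dg Y n j x) = dg Y (Suc n) (Suc j) (dg Y n i x)"
      if "i \<le> j" "j \<le> n" "x \<in> Z n" for n i j x using degen_degen that sub by blast
    show "fc Y (Suc n) i (dg Y n j x) = dg Y (n - 1) (j - 1) (fc Y n i x)"
      if "i < j" "j \<le> n" "x \<in> Z n" for n i j x using face_degen_less that sub by blast
    show "fc Y (Suc n) j (dg Y n j x) = x" if "j \<le> n" "x \<in> Z n" for n j x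
      using face_degen_same that sub by blast
    show "fc Y (Suc n) (Suc j) (dg Y n j x) = x" if "j \<le> n" "x \<in> Z n" for n j x
      using face_Suc_degen_same that sub by blast
    show "fc Y (Suc n) i (dg Y n j x) = dg Y (n - 1) j (fc Y n (i - 1) x)"
      if "Suc j < i" "i \<le> Suc n" "x \<in> Z n" for n i j x using face_degen_greater that sub by blast
  qed
qed

lemma lastfaces_restr: "lastfaces (restr X Z) k m y = lastfaces X k m y"
  by (induction k arbitrary: m y) auto

lemma eta_restr: "eta (restr X Z) \<gamma> n y = eta X \<gamma> n y"
  by (induction X \<gamma> n y rule: eta.induct) (auto simp: lastfaces_restr)

lemma cobdry1_restr: "cobdry1 (restr X Z) \<mu> = cobdry1 X \<mu>"
  unfolding cobdry1_def by simp

lemma cob_section_restr: "cob_section (restr X Z) \<mu> n y = cob_section X \<mu> n y"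
  by (induction n arbitrary: y) (auto simp: eta_restr lastfaces_restr cobdry1_restr)

lemma quot_cells: "cells (quot X Z) n = Some ` (cells X n - Z n) \<union> {None}"
  unfolding quot_def by simp

lemma quot_face_None: "fc (quot X Z) n i None = None"
  unfolding quot_def by simp

lemma quot_degen_None: "dg (quot X Z) n j None = None"
  unfolding quot_def by simp

lemma quot_face_Some:
  "fc (quot X Z) n i (Some a) = (if fc X n i a \<in> Z (n - 1) then None else Some (fc X n i a))"
  unfolding quot_def by simp

lemma quot_degen_Some: "dg (quot X Z) n j (Some a) = Some (dg X n j a)"
  unfolding quot_def by simp

lemma lastfaces_quot_None: "lastfaces (quot X Z) k m None = None"
  by (induction k arbitrary: m) (auto simp: quot_face_None)

locale quotient_setting =
  fixes X :: "'a sset" and Z :: "nat \<Rightarrow> 'a set"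
    and \<alpha> :: "'a \<Rightarrow> 'h::ab_group_add" and \<nu> :: "'a \<Rightarrow> 'h" and \<beta> :: "'a option \<Rightarrow> 'h"
  assumes X_sset: "is_sset X"
    and Z_subsset: "is_subsset X Z"
    and \<nu>_normalized: "normalized_cochain (restr X Z) 1 \<nu>"
    and \<nu>_bounds: "\<forall>z \<in> Z 2. cobdry1 (restr X Z) \<nu> z = \<alpha> z"
    and \<beta>_cocycle: "normalized_2cocycle (quot X Z) \<beta>"
    and \<alpha>_decomposition: "\<forall>x \<in> cells X 2.
           \<beta> (qmap Z 2 x) = \<alpha> x - cobdry1 X (\<lambda>y. if y \<in> Z 1 then \<nu> y else 0) x"
begin

definition \<nu>_ext :: "'a \<Rightarrow> 'h" where "\<nu>_ext y = (if y \<in> Z 1 then \<nu> y else 0)"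

abbreviation \<sigma> :: "nat \<Rightarrow> 'a \<Rightarrow> 'h list" where "\<sigma> \<equiv> cob_section X \<nu>_ext"

sublocale X: simplicial_set X by unfold_locales (rule X_sset)

sublocale Z: normalized_1cochain "restr X Z" \<nu>
  by unfold_locales (rule restr_is_sset[OF X_sset Z_subsset], rule \<nu>_normalized)

lemma Z_cells: "Z n \<subseteq> cells X n"
  using Z_subsset unfolding is_subsset_def by blast

lemma Z_face: "i \<le> Suc n \<Longrightarrow> x \<in> Z (Suc n) \<Longrightarrow> fc X (Suc n) i x \<in> Z n"
  using Z_subsset unfolding is_subsset_def by blast

lemma Z_degen: "j \<le> n \<Longrightarrow> x \<in> Z n \<Longrightarrow> dg X n j x \<in> Z (Suc n)"
  using Z_subsset unfolding is_subsset_def by blast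

lemma degen_notin_Z: "j \<le> n \<Longrightarrow> x \<in> cells X n \<Longrightarrow> x \<notin> Z n \<Longrightarrow> dg X n j x \<notin> Z (Suc n)"
  using Z_face[of j n "dg X n j x"] X.face_degen_same[of j n x] by auto

lemma \<nu>_ext_normalized: "normalized_cochain X 1 \<nu>_ext"
  unfolding normalized_cochain_def
proof (intro allI impI)
  fix m j x assume "Suc m = 1" "j \<le> m" "x \<in> cells X m"
  moreover have "x \<in> Z 0" if "dg X 0 0 x \<in> Z 1"
    using Z_face[of 0 0 "dg X 0 0 x"] that X.face_degen_same[of 0 0 x] \<open>x \<in> cells X m\<close> \<open>Suc m = 1\<close> by simp
  ultimately show "\<nu>_ext (dg X m j x) = 0"
    using Z.cochain_degen[of x] unfolding \<nu>_ext_def by auto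
qed

sublocale X: normalized_1cochain X \<nu>_ext
  by unfold_locales (rule \<nu>_ext_normalized)

lemma qmap_cells: "x \<in> cells X n \<Longrightarrow> qmap Z n x \<in> cells (quot X Z) n"
  unfolding qmap_def quot_cells by auto

lemma quot_cells_cases:
  assumes "w \<in> cells (quot X Z) n"
  obtains "w = None" | x where "x \<in> cells X n" "w = qmap Z n x"
  using assms unfolding quot_cells qmap_def by auto

lemma qmap_face:
  "i \<le> Suc n \<Longrightarrow> x \<in> cells X (Suc n) \<Longrightarrow>
   qmap Z n (fc X (Suc n) i x) = fc (quot X Z) (Suc n) i (qmap Z (Suc n) x)"
  unfolding qmap_def using Z_face[of i n x] by (auto simp: quot_face_None quot_face_Some)

lemma qmap_degen:
  "j \<le> n \<Longrightarrow> x \<in> cells X n \<Longrightarrow> qmap Z (Suc n) (dg X n j x) = dg (quot X Z) n j (qmap Z n x)"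
  unfolding qmap_def using Z_degen[of j n x] degen_notin_Z[of j n x]
  by (auto simp: quot_degen_None quot_degen_Some)

lemma qmap_smap: "smap X (quot X Z) (qmap Z)"
  unfolding smap_def using qmap_cells qmap_face qmap_degen by blast

lemma \<beta>_None: "\<beta> None = 0"
proof -
  have "None \<in> cells (quot X Z) 1" unfolding quot_cells by simp
  then have "\<beta> (dg (quot X Z) 1 0 None) = 0"
    using \<beta>_cocycle unfolding normalized_2cocycle_def normalized_cochain_def by auto
  then show ?thesis by (simp add: quot_degen_None)
qed

lemma eta_quot_None: "eta (quot X Z) \<beta> n None = replicate (n - 1) 0"
proof (induction n rule: less_induct)
  case (less n)
  consider "n = 0" | "n = 1" | m where "n = Suc (Suc m)" by (cases n; cases "n - 1") auto
  then show ?case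
  proof cases
    case (3 m)
    then show ?thesis using less[of "Suc m"] by (simp add: quot_face_None lastfaces_quot_None \<beta>_None)
  qed simp_all
qed

lemma \<alpha>_eq_sum: "\<forall>z\<in>cells X 2. \<alpha> z = \<beta> (qmap Z 2 z) + cobdry1 X \<nu>_ext z"
  using \<alpha>_decomposition unfolding \<nu>_ext_def by simp

lemma twisted_face_lift:
  assumes x: "x \<in> cells X (Suc n)" and g: "length g = Suc n" and i: "i \<le> Suc n"
  shows "fc (twisted X \<alpha>) (Suc n) i (map2 (+) g (\<sigma> (Suc n) x), x) =
     (map2 (+) (fst (fc (twisted (quot X Z) \<beta>) (Suc n) i (g, qmap Z (Suc n) x))) (\<sigma> n (fc X (Suc n) i x)),
      fc X (Suc n) i x)"
proof -
  have "fc (twisted X \<alpha>) (Suc n) i (map2 (+) g (\<sigma> (Suc n) x), x) =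
        fc (twisted X (\<lambda>z. \<beta> (qmap Z 2 z) + cobdry1 X \<nu>_ext z)) (Suc n) i (map2 (+) g (\<sigma> (Suc n) x), x)"
    by (rule X.twisted_face_cong[OF \<alpha>_eq_sum x])
  also have "\<dots> = (map2 (+) (fst (fc (twisted X (\<lambda>z. \<beta> (qmap Z 2 z))) (Suc n) i (g, x))) (\<sigma> n (fc X (Suc n) i x)),
                   fc X (Suc n) i x)"
    by (rule X.twisted_face_shift[OF x g i])
  also have "fst (fc (twisted X (\<lambda>z. \<beta> (qmap Z 2 z))) (Suc n) i (g, x)) =
             fst (fc (twisted (quot X Z) \<beta>) (Suc n) i (g, qmap Z (Suc n) x))"
    using X.twisted_face_smap[OF qmap_smap _ x i, of "\<lambda>z. \<beta> (qmap Z 2 z)" \<beta> g] by simp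
  finally show ?thesis by simp
qed

lemma twisted_face_descend:
  assumes x: "x \<in> cells X (Suc n)" and g: "length g = Suc n" and i: "i \<le> Suc n"
  shows "fc (twisted (quot X Z) \<beta>) (Suc n) i (map2 (-) g (\<sigma> (Suc n) x), qmap Z (Suc n) x) =
     (map2 (-) (fst (fc (twisted X \<alpha>) (Suc n) i (g, x))) (\<sigma> n (fc X (Suc n) i x)), qmap Z n (fc X (Suc n) i x))"
proof -
  have "fc (twisted (quot X Z) \<beta>) (Suc n) i (map2 (-) g (\<sigma> (Suc n) x), qmap Z (Suc n) x) =
        (fst (fc (twisted X (\<lambda>z. \<beta> (qmap Z 2 z))) (Suc n) i (map2 (-) g (\<sigma> (Suc n) x), x)),
         qmap Z n (fc X (Suc n) i x))"
    by (rule X.twisted_face_smap[OF qmap_smap _ x i]) simp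
  also have "fc (twisted X (\<lambda>z. \<beta> (qmap Z 2 z))) (Suc n) i (map2 (-) g (\<sigma> (Suc n) x), x) =
      (map2 (-) (fst (fc (twisted X (\<lambda>z. \<beta> (qmap Z 2 z) + cobdry1 X \<nu>_ext z)) (Suc n) i (g, x)))
                (\<sigma> n (fc X (Suc n) i x)), fc X (Suc n) i x)"
    by (rule X.twisted_face_unshift[OF x g i])
  also have "fc (twisted X (\<lambda>z. \<beta> (qmap Z 2 z) + cobdry1 X \<nu>_ext z)) (Suc n) i (g, x) =
             fc (twisted X \<alpha>) (Suc n) i (g, x)"
    by (rule X.twisted_face_cong[OF \<alpha>_eq_sum x, symmetric])
  finally show ?thesis by simp
qed

lemma twisted_degen_lift:
  "x \<in> cells X n \<Longrightarrow> length g = n \<Longrightarrow> j \<le> n \<Longrightarrow>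
   dg (twisted X \<alpha>) n j (map2 (+) g (\<sigma> n x), x) =
   (map2 (+) (fst (dg (twisted (quot X Z) \<beta>) n j (g, qmap Z n x))) (\<sigma> (Suc n) (dg X n j x)), dg X n j x)"
  by (simp add: twisted_degen X.nerve_degen_shift del: cob_section.simps)

lemma twisted_degen_descend:
  "x \<in> cells X n \<Longrightarrow> length g = n \<Longrightarrow> j \<le> n \<Longrightarrow>
   dg (twisted (quot X Z) \<beta>) n j (map2 (-) g (\<sigma> n x), qmap Z n x) =
   (map2 (-) (fst (dg (twisted X \<alpha>) n j (g, x))) (\<sigma> (Suc n) (dg X n j x)), qmap Z (Suc n) (dg X n j x))"
  by (simp add: twisted_degen X.nerve_degen_unshift qmap_degen del: cob_section.simps)

section \<open>The convex isomorphism\<close>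

lemma phi_nu_eq_cob_section: "z \<in> Z n \<Longrightarrow> phi_nu X Z \<alpha> \<nu> n z = \<sigma> n z"
proof -
  assume z: "z \<in> Z n"
  define g0 where "g0 n z = (if z \<in> Z n then cob_section (restr X Z) \<nu> n z else [])" for n z
  have "smap (restr X Z) (twisted (restr X Z) \<alpha>) (\<lambda>n z. (cob_section (restr X Z) \<nu> n z, z))"
    using Z.smap_twisted_cong[OF _ Z.cob_section_is_section] \<nu>_bounds by simp
  then have g0_section: "smap (restr X Z) (twisted (restr X Z) \<alpha>) (\<lambda>n z. (g0 n z, z))"
    by (rule Z.smap_cong) (simp add: g0_def)
  have "phi_nu X Z \<alpha> \<nu> = g0"
    unfolding phi_nu_def
  proof (rule the_equality)
    show "smap (restr X Z) (twisted (restr X Z) \<alpha>) (\<lambda>n z. (g0 n z, z)) \<and>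
          (\<forall>z\<in>Z 1. g0 1 z = [\<nu> z]) \<and> (\<forall>n z. z \<notin> Z n \<longrightarrow> g0 n z = [])"
      using g0_section by (simp add: g0_def)
  next
    fix g assume g: "smap (restr X Z) (twisted (restr X Z) \<alpha>) (\<lambda>n z. (g n z, z)) \<and>
          (\<forall>z\<in>Z 1. g 1 z = [\<nu> z]) \<and> (\<forall>n z. z \<notin> Z n \<longrightarrow> g n z = [])"
    show "g = g0"
    proof (intro ext)
      fix n z
      show "g n z = g0 n z"
        using Z.twisted_section_unique[OF conjunct1[OF g] g0_section, of z n] g by (auto simp: g0_def)
    qed
  qed
  moreover have "cob_section (restr X Z) \<nu> n z = cob_section (restr X Z) \<nu>_ext n z"
    by (rule Z.cob_section_cong) (use z in \<open>auto simp: \<nu>_ext_def\<close>)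
  ultimately show ?thesis using z by (simp add: g0_def cob_section_restr del: cob_section.simps)
qed

lemma sdist_base_point:
  assumes p: "sdist (quot X Z) \<beta> p"
  shows "p n None = delta (replicate n 0, None)"
proof (induction n)
  case 0
  have None: "None \<in> cells (quot X Z) 0" by (simp add: quot_cells)
  have "supp (p 0 None) \<subseteq> {([], None)}"
    using sdist_supp[OF p None] by auto
  then show ?case using Dist_eq_delta[OF sdist_in_Dist[OF p None]] by simp
next
  case (Suc n)
  have "p (Suc n) (dg (quot X Z) n 0 None) = Dmap (dg (twisted (quot X Z) \<beta>) n 0) (p n None)"
    by (rule sdist_degen[OF p]) (auto simp: quot_cells)
  then show ?case using Suc by (simp add: quot_degen_None Dmap_delta twisted_degen nerve_degen_0)
qed

lemma twisted_face_base_point: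
  "i \<le> Suc n \<Longrightarrow> fc (twisted (quot X Z) \<beta>) (Suc n) i (replicate (Suc n) 0, None) = (replicate n 0, None)"
  by (cases "i = 0")
     (simp_all add: twisted_face eta_quot_None quot_face_None nerve_face_replicate_0 del: replicate.simps)

definition lift :: "(nat \<Rightarrow> 'a option \<Rightarrow> ('h list \<times> 'a option \<Rightarrow> real)) \<Rightarrow> nat \<Rightarrow> 'a \<Rightarrow> ('h list \<times> 'a \<Rightarrow> real)"
  where "lift p n x =
    (if x \<in> cells X n then Dmap (\<lambda>a. (map2 (+) (fst a) (\<sigma> n x), x)) (p n (qmap Z n x)) else (\<lambda>_. 0))"

definition descend :: "(nat \<Rightarrow> 'a \<Rightarrow> ('h list \<times> 'a \<Rightarrow> real)) \<Rightarrow> nat \<Rightarrow> 'a option \<Rightarrow> ('h list \<times> 'a option \<Rightarrow> real)"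
  where "descend r n w =
    (if w \<in> cells (quot X Z) n then
       (case w of None \<Rightarrow> delta (replicate n 0, None)
        | Some x \<Rightarrow> Dmap (\<lambda>a. (map2 (-) (fst a) (\<sigma> n x), Some x)) (r n x))
     else (\<lambda>_. 0))"

lemma lift_face:
  assumes p: "sdist (quot X Z) \<beta> p" and i: "i \<le> Suc n" and x: "x \<in> cells X (Suc n)"
  shows "lift p n (fc X (Suc n) i x) = Dmap (fc (twisted X \<alpha>) (Suc n) i) (lift p (Suc n) x)"
proof -
  let ?w = "qmap Z (Suc n) x"
  have w: "?w \<in> cells (quot X Z) (Suc n)" by (rule qmap_cells[OF x])
  have "lift p n (fc X (Suc n) i x) = Dmap (\<lambda>a. (map2 (+) (fst a) (\<sigma> n (fc X (Suc n) i x)), fc X (Suc n) i x))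
      (Dmap (fc (twisted (quot X Z) \<beta>) (Suc n) i) (p (Suc n) ?w))"
    using X.face_cells[OF i x] qmap_face[OF i x] sdist_face[OF p i w]
    unfolding lift_def by (simp del: cob_section.simps)
  also have "\<dots> = Dmap (fc (twisted X \<alpha>) (Suc n) i) (Dmap (\<lambda>a. (map2 (+) (fst a) (\<sigma> (Suc n) x), x)) (p (Suc n) ?w))"
  proof (rule Dmap_commute[OF sdist_finite_supp[OF p w]])
    fix a assume "a \<in> supp (p (Suc n) ?w)"
    then have "a = (fst a, ?w)" "length (fst a) = Suc n" using sdist_supp[OF p w] by auto
    then show "(map2 (+) (fst (fc (twisted (quot X Z) \<beta>) (Suc n) i a)) (\<sigma> n (fc X (Suc n) i x)), fc X (Suc n) i x) =
               fc (twisted X \<alpha>) (Suc n) i (map2 (+) (fst a) (\<sigma> (Suc n) x), x)"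
      using twisted_face_lift[OF x _ i] by metis
  qed
  also have "\<dots> = Dmap (fc (twisted X \<alpha>) (Suc n) i) (lift p (Suc n) x)"
    unfolding lift_def using x by simp
  finally show ?thesis .
qed

lemma lift_degen:
  assumes p: "sdist (quot X Z) \<beta> p" and j: "j \<le> n" and x: "x \<in> cells X n"
  shows "lift p (Suc n) (dg X n j x) = Dmap (dg (twisted X \<alpha>) n j) (lift p n x)"
proof -
  let ?w = "qmap Z n x"
  have w: "?w \<in> cells (quot X Z) n" by (rule qmap_cells[OF x])
  have "lift p (Suc n) (dg X n j x) = Dmap (\<lambda>a. (map2 (+) (fst a) (\<sigma> (Suc n) (dg X n j x)), dg X n j x))
      (Dmap (dg (twisted (quot X Z) \<beta>) n j) (p n ?w))"
    using X.degen_cells[OF j x] qmap_degen[OF j x] sdist_degen[OF p j w]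
    unfolding lift_def by (simp del: cob_section.simps)
  also have "\<dots> = Dmap (dg (twisted X \<alpha>) n j) (Dmap (\<lambda>a. (map2 (+) (fst a) (\<sigma> n x), x)) (p n ?w))"
  proof (rule Dmap_commute[OF sdist_finite_supp[OF p w]])
    fix a assume "a \<in> supp (p n ?w)"
    then have "a = (fst a, ?w)" "length (fst a) = n" using sdist_supp[OF p w] by auto
    then show "(map2 (+) (fst (dg (twisted (quot X Z) \<beta>) n j a)) (\<sigma> (Suc n) (dg X n j x)), dg X n j x) =
               dg (twisted X \<alpha>) n j (map2 (+) (fst a) (\<sigma> n x), x)"
      using twisted_degen_lift[OF x _ j] by metis
  qed
  also have "\<dots> = Dmap (dg (twisted X \<alpha>) n j) (lift p n x)"
    unfolding lift_def using x by simp
  finally show ?thesis .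
qed

lemma lift_sdist:
  assumes p: "sdist (quot X Z) \<beta> p"
  shows "sdist X \<alpha> (lift p)"
proof (rule sdistI)
  fix n x assume x: "x \<in> cells X n"
  show "lift p n x \<in> Dist (cells (twisted X \<alpha>) n)"
    unfolding lift_def using x sdist_supp[OF p qmap_cells[OF x]]
    by (simp del: cob_section.simps, intro Dmap_in_Dist[OF sdist_in_Dist[OF p qmap_cells[OF x]]])
       (auto simp: twisted_cells cob_section_length simp del: cob_section.simps)
  have "Dmap snd (lift p n x) = Dmap (\<lambda>_. x) (p n (qmap Z n x))"
    unfolding lift_def using x Dmap_comp[OF sdist_finite_supp[OF p qmap_cells[OF x]],
      of snd "\<lambda>a. (map2 (+) (fst a) (\<sigma> n x), x)"]
    by (simp del: cob_section.simps)
  then show "Dmap snd (lift p n x) = delta x"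
    using Dmap_const[OF sdist_in_Dist[OF p qmap_cells[OF x]]] by simp
qed (use lift_face[OF p] lift_degen[OF p] in \<open>auto simp: lift_def\<close>)

lemma lift_in_sDist_rel:
  assumes p: "p \<in> sDist (quot X Z) \<beta>"
  shows "lift p \<in> sDist_rel X Z \<alpha> \<nu>"
proof -
  have p: "sdist (quot X Z) \<beta> p" using p unfolding sDist_def by simp
  have "lift p n z = delta (phi_nu X Z \<alpha> \<nu> n z, z)" if z: "z \<in> Z n" for n z
  proof -
    have "map2 (+) (replicate n 0) (\<sigma> n z) = \<sigma> n z"
      by (rule nth_equalityI) (auto simp: cob_section_length simp del: cob_section.simps)
    then show ?thesis
      using z Z_cells sdist_base_point[OF p] phi_nu_eq_cob_section[OF z]
      unfolding lift_def qmap_def by (auto simp: Dmap_delta simp del: cob_section.simps)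
  qed
  then show ?thesis using lift_sdist[OF p] unfolding sDist_rel_def sDist_def by blast
qed

lemma descend_qmap:
  assumes r: "r \<in> sDist_rel X Z \<alpha> \<nu>" and x: "x \<in> cells X n"
  shows "descend r n (qmap Z n x) = Dmap (\<lambda>a. (map2 (-) (fst a) (\<sigma> n x), qmap Z n x)) (r n x)"
proof (cases "x \<in> Z n")
  case True
  then have "r n x = delta (\<sigma> n x, x)" using r phi_nu_eq_cob_section unfolding sDist_rel_def by auto
  moreover have "map2 (-) (\<sigma> n x) (\<sigma> n x) = replicate n 0"
    by (rule nth_equalityI) (auto simp: cob_section_length simp del: cob_section.simps)
  ultimately show ?thesis
    using True unfolding descend_def qmap_def by (simp add: Dmap_delta quot_cells del: cob_section.simps)
next
  case False
  then show ?thesis using x qmap_cells[OF x] unfolding descend_def by (simp add: qmap_def)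
qed

lemma descend_face:
  assumes r: "r \<in> sDist_rel X Z \<alpha> \<nu>" and i: "i \<le> Suc n" and w: "w \<in> cells (quot X Z) (Suc n)"
  shows "descend r n (fc (quot X Z) (Suc n) i w) = Dmap (fc (twisted (quot X Z) \<beta>) (Suc n) i) (descend r (Suc n) w)"
  using w
proof (cases rule: quot_cells_cases)
  case 1
  then show ?thesis
    using twisted_face_base_point[OF i] by (simp add: descend_def quot_cells quot_face_None Dmap_delta)
next
  case (2 x)
  then have x: "x \<in> cells X (Suc n)" by simp
  have r': "sdist X \<alpha> r" using r unfolding sDist_rel_def sDist_def by simp
  have "descend r n (fc (quot X Z) (Suc n) i w) =
        Dmap (\<lambda>a. (map2 (-) (fst a) (\<sigma> n (fc X (Suc n) i x)), qmap Z n (fc X (Suc n) i x)))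
          (Dmap (fc (twisted X \<alpha>) (Suc n) i) (r (Suc n) x))"
    using 2 qmap_face[OF i x] descend_qmap[OF r X.face_cells[OF i x]] sdist_face[OF r' i x] by simp
  also have "\<dots> = Dmap (fc (twisted (quot X Z) \<beta>) (Suc n) i)
                     (Dmap (\<lambda>a. (map2 (-) (fst a) (\<sigma> (Suc n) x), qmap Z (Suc n) x)) (r (Suc n) x))"
  proof (rule Dmap_commute[OF sdist_finite_supp[OF r' x]])
    fix a assume "a \<in> supp (r (Suc n) x)"
    then have "a = (fst a, x)" "length (fst a) = Suc n" using sdist_supp[OF r' x] by auto
    then show "(map2 (-) (fst (fc (twisted X \<alpha>) (Suc n) i a)) (\<sigma> n (fc X (Suc n) i x)), qmap Z n (fc X (Suc n) i x)) =
               fc (twisted (quot X Z) \<beta>) (Suc n) i (map2 (-) (fst a) (\<sigma> (Suc n) x), qmap Z (Suc n) x)"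
      using twisted_face_descend[OF x _ i] by metis
  qed
  also have "\<dots> = Dmap (fc (twisted (quot X Z) \<beta>) (Suc n) i) (descend r (Suc n) w)"
    using 2 descend_qmap[OF r x] by simp
  finally show ?thesis .
qed

lemma descend_degen:
  assumes r: "r \<in> sDist_rel X Z \<alpha> \<nu>" and j: "j \<le> n" and w: "w \<in> cells (quot X Z) n"
  shows "descend r (Suc n) (dg (quot X Z) n j w) = Dmap (dg (twisted (quot X Z) \<beta>) n j) (descend r n w)"
  using w
proof (cases rule: quot_cells_cases)
  case 1
  then show ?thesis
    using j by (simp add: descend_def quot_cells quot_degen_None Dmap_delta twisted_degen nerve_degen_replicate_0
      del: replicate.simps)
next
  case (2 x)
  then have x: "x \<in> cells X n" by simp
  have r': "sdist X \<alpha> r" using r unfolding sDist_rel_def sDist_def by simp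
  have "descend r (Suc n) (dg (quot X Z) n j w) =
        Dmap (\<lambda>a. (map2 (-) (fst a) (\<sigma> (Suc n) (dg X n j x)), qmap Z (Suc n) (dg X n j x)))
          (Dmap (dg (twisted X \<alpha>) n j) (r n x))"
    using 2 qmap_degen[OF j x] descend_qmap[OF r X.degen_cells[OF j x]] sdist_degen[OF r' j x] by simp
  also have "\<dots> = Dmap (dg (twisted (quot X Z) \<beta>) n j)
                     (Dmap (\<lambda>a. (map2 (-) (fst a) (\<sigma> n x), qmap Z n x)) (r n x))"
  proof (rule Dmap_commute[OF sdist_finite_supp[OF r' x]])
    fix a assume "a \<in> supp (r n x)"
    then have "a = (fst a, x)" "length (fst a) = n" using sdist_supp[OF r' x] by auto
    then show "(map2 (-) (fst (dg (twisted X \<alpha>) n j a)) (\<sigma> (Suc n) (dg X n j x)), qmap Z (Suc n) (dg X n j x)) =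
               dg (twisted (quot X Z) \<beta>) n j (map2 (-) (fst a) (\<sigma> n x), qmap Z n x)"
      using twisted_degen_descend[OF x _ j] by metis
  qed
  also have "\<dots> = Dmap (dg (twisted (quot X Z) \<beta>) n j) (descend r n w)"
    using 2 descend_qmap[OF r x] by simp
  finally show ?thesis .
qed

lemma descend_in_sDist:
  assumes r: "r \<in> sDist_rel X Z \<alpha> \<nu>"
  shows "descend r \<in> sDist (quot X Z) \<beta>"
proof -
  have r': "sdist X \<alpha> r" using r unfolding sDist_rel_def sDist_def by simp
  have "sdist (quot X Z) \<beta> (descend r)"
  proof (rule sdistI)
    fix n w assume "w \<in> cells (quot X Z) n"
    then show "descend r n w \<in> Dist (cells (twisted (quot X Z) \<beta>) n)"
    proof (cases rule: quot_cells_cases)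
      case 1
      then show ?thesis unfolding descend_def by (simp add: delta_in_Dist twisted_cells quot_cells)
    next
      case (2 x)
      show ?thesis
        unfolding 2 descend_qmap[OF r 2(1)] using sdist_supp[OF r' 2(1)] qmap_cells[OF 2(1)]
        by (intro Dmap_in_Dist[OF sdist_in_Dist[OF r' 2(1)]])
           (auto simp: twisted_cells cob_section_length simp del: cob_section.simps)
    qed
  next
    fix n w assume "w \<in> cells (quot X Z) n"
    then show "Dmap snd (descend r n w) = delta w"
    proof (cases rule: quot_cells_cases)
      case 1
      then show ?thesis unfolding descend_def by (simp add: Dmap_delta quot_cells)
    next
      case (2 x)
      have "Dmap snd (descend r n w) = Dmap (\<lambda>_. qmap Z n x) (r n x)"
        unfolding 2 descend_qmap[OF r 2(1)]
        using Dmap_comp[OF sdist_finite_supp[OF r' 2(1)], of snd "\<lambda>a. (map2 (-) (fst a) (\<sigma> n x), qmap Z n x)"]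
        by (simp del: cob_section.simps)
      then show ?thesis using Dmap_const[OF sdist_in_Dist[OF r' 2(1)]] 2 by simp
    qed
  qed (use descend_face[OF r] descend_degen[OF r] in \<open>auto simp: descend_def\<close>)
  then show ?thesis unfolding sDist_def by simp
qed

lemma lift_descend:
  assumes r: "r \<in> sDist_rel X Z \<alpha> \<nu>"
  shows "lift (descend r) = r"
proof (rule ext, rule ext)
  fix n x
  have r': "sdist X \<alpha> r" using r unfolding sDist_rel_def sDist_def by simp
  show "lift (descend r) n x = r n x"
  proof (cases "x \<in> cells X n")
    case True
    have "Dmap (\<lambda>a. (map2 (+) (fst a) (\<sigma> n x), x)) (Dmap (\<lambda>a. (map2 (-) (fst a) (\<sigma> n x), qmap Z n x)) (r n x)) = r n x"
      using sdist_supp[OF r' True]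
      by (intro Dmap_inverse[OF sdist_finite_supp[OF r' True]])
         (metis fst_conv map2_diff_add_cancel cob_section_length)
    then show ?thesis unfolding lift_def using True descend_qmap[OF r True] by simp
  next
    case False
    then show ?thesis unfolding lift_def using sdist_outside[OF r' False] by simp
  qed
qed

lemma descend_lift:
  assumes p: "p \<in> sDist (quot X Z) \<beta>"
  shows "descend (lift p) = p"
proof (rule ext, rule ext)
  fix n w
  have p': "sdist (quot X Z) \<beta> p" using p unfolding sDist_def by simp
  show "descend (lift p) n w = p n w"
  proof (cases "w \<in> cells (quot X Z) n")
    case w: True
    show ?thesis
    proof (cases w)
      case None
      then show ?thesis unfolding descend_def using w sdist_base_point[OF p'] by simp
    next
      case (Some x)
      have x: "x \<in> cells X n" "qmap Z n x = Some x" using w Some unfolding quot_cells qmap_def by auto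
      have "Dmap (\<lambda>a. (map2 (-) (fst a) (\<sigma> n x), Some x)) (Dmap (\<lambda>a. (map2 (+) (fst a) (\<sigma> n x), x)) (p n w)) = p n w"
        using sdist_supp[OF p' w] Some
        by (intro Dmap_inverse[OF sdist_finite_supp[OF p' w]])
           (metis fst_conv map2_add_diff_cancel cob_section_length)
      then show ?thesis unfolding descend_def lift_def using w Some x by simp
    qed
  next
    case False
    then show ?thesis unfolding descend_def using sdist_outside[OF p' False] by simp
  qed
qed

lemma lift_mixd:
  assumes p: "p \<in> sDist (quot X Z) \<beta>" and p': "p' \<in> sDist (quot X Z) \<beta>"
  shows "lift (mixd t p p') = mixd t (lift p) (lift p')"
proof (intro ext)
  fix n x e
  have sp: "sdist (quot X Z) \<beta> p" and sp': "sdist (quot X Z) \<beta> p'"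
    using p p' unfolding sDist_def by simp_all
  have "Dmap \<phi> (\<lambda>e. t * p n (qmap Z n x) e + (1 - t) * p' n (qmap Z n x) e) e =
             t * Dmap \<phi> (p n (qmap Z n x)) e + (1 - t) * Dmap \<phi> (p' n (qmap Z n x)) e"
    if "x \<in> cells X n" for \<phi> :: "'h list \<times> 'a option \<Rightarrow> 'h list \<times> 'a"
    by (rule Dmap_mix[OF sdist_finite_supp[OF sp qmap_cells[OF that]] sdist_finite_supp[OF sp' qmap_cells[OF that]]])
  then show "lift (mixd t p p') n x e = mixd t (lift p) (lift p') n x e"
    unfolding lift_def mixd_def by (simp del: cob_section.simps)
qed

end

theorem mainTheorem3:
  fixes X :: "'a sset" and Z :: "nat \<Rightarrow> 'a set"
    and \<alpha> :: "'a \<Rightarrow> 'h::ab_group_add" and \<nu> :: "'a \<Rightarrow> 'h"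
    and \<beta> :: "'a option \<Rightarrow> 'h"
  assumes "is_sset X"
    and "is_subsset X Z"
    and "normalized_2cocycle X \<alpha>"
    and "normalized_cochain (restr X Z) 1 \<nu>"
    and "\<forall>z \<in> Z 2. cobdry1 (restr X Z) \<nu> z = \<alpha> z"
    and "normalized_2cocycle (quot X Z) \<beta>"
    and "\<forall>x \<in> cells X 2.
           \<beta> (qmap Z 2 x) = \<alpha> x - cobdry1 X (\<lambda>y. if y \<in> Z 1 then \<nu> y else 0) x"
  shows "\<exists>F. convex_iso (sDist (quot X Z) \<beta>) (sDist_rel X Z \<alpha> \<nu>) F"
proof -
  interpret quotient_setting X Z \<alpha> \<nu> \<beta>
    using assms(1,2,4-7) by unfold_locales
  have "bij_betw lift (sDist (quot X Z) \<beta>) (sDist_rel X Z \<alpha> \<nu>)"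
    by (rule bij_betw_byWitness[where f' = descend])
       (use descend_lift lift_descend lift_in_sDist_rel descend_in_sDist in auto)
  then have "convex_iso (sDist (quot X Z) \<beta>) (sDist_rel X Z \<alpha> \<nu>) lift"
    unfolding convex_iso_def using lift_mixd by blast
  then show ?thesis by blast
qed

end
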